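(* Let $\Gamma\subset\operatorname{SU}(2)$ be the binary tetrahedral, binary octahedral, or binary icosahedral group, let $\mathsf 2=\mathbb C^2|_\Gamma$ be its standard representation and $\mathsf 3=\operatorname{S}^2(\mathbb C^2)|_\Gamma$. For an irreducible complex representation $\mathsf i$ of $\Gamma$ and a representation $\mathsf j$ put $P_{\mathsf i,\mathsf j}(t)=\sum_{n\ge0}\dim\operatorname{Hom}_\Gamma\bigl(\mathsf i,\operatorname{S}^n(\mathsf j)\bigr)t^n$. Then $$P_{\mathsf i,\mathsf 3}(t)=\begin{cases}\dfrac{P_{\mathsf i,\mathsf 2}(t^{1/2})}{1-t^2}&\text{if }\mathsf i\text{ is not spinorial},\\[2mm] 0&\text{if }\mathsf i\text{ is spinorial.}\end{cases}$$
   Context: An irreducible representation $\mathsf i$ of $\Gamma$ is called spinorial if the nontrivial central element $-I\in\Gamma$ acts on it by $-1$. For non-spinorial $\mathsf i$, $P_{\mathsf i,\mathsf 2}(t)$ involves only even powers of $t$, so $P_{\mathsf i,\mathsf 2}(t^{1/2})$ is a power series in $t$. *)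

theory Defs
  imports "HOL-Analysis.Analysis" "HOL-Combinatorics.Permutations"
          "HOL-Computational_Algebra.Formal_Power_Series" "HOL-Library.Function_Algebras"
begin

text \<open>The quaternion q0 + q1 i + q2 j + q3 k is realised as the SU(2) matrix
  [[q0 + q1 i, q2 + q3 i], [-q2 + q3 i, q0 - q1 i]] (an injective ring homomorphism).\<close>
definition quat_mat :: "(nat \<Rightarrow> real) \<Rightarrow> complex^2^2" where
  "quat_mat q = (\<chi> r s.
     if r = 1 \<and> s = 1 then Complex (q 0) (q 1)
     else if r = 1 \<and> s = 2 then Complex (q 2) (q 3)
     else if r = 2 \<and> s = 1 then Complex (- q 2) (q 3)
     else Complex (q 0) (- q 1))"

definition hurwitz_units :: "(nat \<Rightarrow> real) set" where
  "hurwitz_units = {q. (\<exists>a<4. \<bar>q a\<bar> = 1 \<and> (\<forall>b<4. b \<noteq> a \<longrightarrow> q b = 0))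
                      \<or> (\<forall>a<4. \<bar>q a\<bar> = 1/2)}"

definition octa_extra :: "(nat \<Rightarrow> real) set" where
  "octa_extra = {q. \<exists>a<4. \<exists>b<4. a \<noteq> b \<and> \<bar>q a\<bar> = 1 / sqrt 2 \<and> \<bar>q b\<bar> = 1 / sqrt 2
                       \<and> (\<forall>c<4. c \<noteq> a \<and> c \<noteq> b \<longrightarrow> q c = 0)}"

definition golden :: real where "golden = (1 + sqrt 5) / 2"

definition icosa_extra :: "(nat \<Rightarrow> real) set" where
  "icosa_extra = {q. \<exists>p. p permutes {..<4} \<and> evenperm p \<and>
      (\<forall>a<4. \<bar>q a\<bar> = [0, 1/2, 1 / (2 * golden), golden / 2] ! (p a))}"

definition binary_tetrahedral :: "(complex^2^2) set" where
  "binary_tetrahedral = quat_mat ` hurwitz_units"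

definition binary_octahedral :: "(complex^2^2) set" where
  "binary_octahedral = quat_mat ` (hurwitz_units \<union> octa_extra)"

definition binary_icosahedral :: "(complex^2^2) set" where
  "binary_icosahedral = quat_mat ` (hurwitz_units \<union> icosa_extra)"

definition is_rep :: "(complex^2^2) set \<Rightarrow> (complex^2^2 \<Rightarrow> complex^'n^'n) \<Rightarrow> bool" where
  "is_rep G \<rho> \<longleftrightarrow> \<rho> (mat 1) = mat 1 \<and> (\<forall>g\<in>G. \<forall>h\<in>G. \<rho> (g ** h) = \<rho> g ** \<rho> h)"

definition irred_rep :: "(complex^2^2) set \<Rightarrow> (complex^2^2 \<Rightarrow> complex^'n^'n) \<Rightarrow> bool" where
  "irred_rep G \<rho> \<longleftrightarrow> is_rep G \<rho> \<and>
     (\<forall>W. vec.subspace W \<and> (\<forall>g\<in>G. \<forall>w\<in>W. \<rho> g *v w \<in> W) \<longrightarrow> W = {0} \<or> W = UNIV)"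

definition spinorial :: "(complex^2^2 \<Rightarrow> complex^'n^'n) \<Rightarrow> bool" where
  "spinorial \<rho> \<longleftrightarrow> \<rho> (- mat 1) = - mat 1"

text \<open>The representations 2 and 3 as m x m matrices indexed by {0..<m}:
  std_mat is the defining representation on C^2, sym2_mat the induced action on
  S^2(C^2) in the basis x^2, xy, y^2 (x = e1, y = e2).\<close>
definition std_mat :: "complex^2^2 \<Rightarrow> nat \<Rightarrow> nat \<Rightarrow> complex" where
  "std_mat g i j = g $ (if i = 0 then 1 else 2) $ (if j = 0 then 1 else 2)"

definition sym2_mat :: "complex^2^2 \<Rightarrow> nat \<Rightarrow> nat \<Rightarrow> complex" where
  "sym2_mat g i j =
     (let a = g $ 1 $ 1; b = g $ 1 $ 2; c = g $ 2 $ 1; d = g $ 2 $ 2 in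
      [[a^2, a*b, b^2], [2*a*c, a*d + b*c, 2*b*d], [c^2, c*d, d^2]] ! i ! j)"

definition idx :: "nat \<Rightarrow> nat \<Rightarrow> nat list set" where
  "idx m n = {xs. length xs = n \<and> set xs \<subseteq> {..<m}}"

text \<open>S^n(C^m) = symmetric tensors in (C^m)^{\<otimes> n} (coordinates on idx m n, zero outside).\<close>
definition SymPow :: "nat \<Rightarrow> nat \<Rightarrow> (nat list \<Rightarrow> complex) set" where
  "SymPow m n = {T. (\<forall>xs. xs \<notin> idx m n \<longrightarrow> T xs = 0) \<and>
                    (\<forall>xs ys. mset xs = mset ys \<longrightarrow> T xs = T ys)}"

text \<open>Action of an m x m matrix A on (C^m)^{\<otimes> n}, i.e. A \<otimes> ... \<otimes> A.\<close>
definition tensor_act :: "nat \<Rightarrow> nat \<Rightarrow> (nat \<Rightarrow> nat \<Rightarrow> complex) \<Rightarrow> (nat list \<Rightarrow> complex) \<Rightarrow> nat list \<Rightarrow> complex" where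
  "tensor_act m n A T = (\<lambda>is. if is \<in> idx m n then
      (\<Sum>js\<in>idx m n. (\<Prod>k<n. A (is ! k) (js ! k)) * T js) else 0)"

definition fscale :: "complex \<Rightarrow> ('n \<Rightarrow> nat list \<Rightarrow> complex) \<Rightarrow> ('n \<Rightarrow> nat list \<Rightarrow> complex)" where
  "fscale c f = (\<lambda>a xs. c * f a xs)"

lemma fscale_vector_space: "vector_space fscale"
  by unfold_locales (auto simp: fscale_def algebra_simps fun_eq_iff)

text \<open>Hom_\<Gamma>(C^'n, S^n(C^m)): a linear map \<Phi> : C^'n \<rightarrow> S^n(C^m) is encoded by the images f a
  of the standard basis vectors e_a, i.e. \<Phi> v = \<Sum>a. v$a \<cdot> f a. Equivariance
  \<Phi>(\<rho> g v) = \<sigma>(g)\<Phi>(v) for all v is equivalently required on the basis vectors.\<close>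
definition HomG :: "(complex^2^2) set \<Rightarrow> (complex^2^2 \<Rightarrow> complex^'n^'n) \<Rightarrow> nat
     \<Rightarrow> (complex^2^2 \<Rightarrow> nat \<Rightarrow> nat \<Rightarrow> complex) \<Rightarrow> nat \<Rightarrow> ('n \<Rightarrow> nat list \<Rightarrow> complex) set" where
  "HomG G \<rho> m \<sigma> n = {f. (\<forall>a. f a \<in> SymPow m n) \<and>
     (\<forall>g\<in>G. \<forall>a. (\<lambda>xs. \<Sum>b\<in>UNIV. (\<rho> g) $ b $ a * f b xs) = tensor_act m n (\<sigma> g) (f a))}"

definition Pser :: "(complex^2^2) set \<Rightarrow> (complex^2^2 \<Rightarrow> complex^'n^'n) \<Rightarrow> nat
     \<Rightarrow> (complex^2^2 \<Rightarrow> nat \<Rightarrow> nat \<Rightarrow> complex) \<Rightarrow> rat fps" where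
  "Pser G \<rho> m \<sigma> = Abs_fps (\<lambda>n. of_nat (vector_space.dim fscale (HomG G \<rho> m \<sigma> n)))"

end

theory Submission
  imports Defs
begin

text \<open>Identify \<open>S\<^sup>2(\<complex>\<^sup>2)\<close> with the quadratic forms in \<open>x, y\<close>, coordinates \<open>z\<^sub>0, z\<^sub>1, z\<^sub>2\<close> corresponding
  to \<open>x\<^sup>2, xy, y\<^sup>2\<close>. Substituting \<open>(x\<^sup>2, xy, y\<^sup>2)\<close> into a form of degree \<open>n\<close> in \<open>z\<close> is an
  \<open>SL(2)\<close>-equivariant map \<open>S\<^sup>n(S\<^sup>2 \<complex>\<^sup>2) \<rightarrow> S\<^sup>2\<^sup>n(\<complex>\<^sup>2)\<close>; it has an equivariant section (polarisation),
  and its kernel is the image of multiplication by the discriminant \<open>z\<^sub>1\<^sup>2 - z\<^sub>0 z\<^sub>2\<close>, which is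
  invariant under matrices of determinant 1. So for every \<open>\<Gamma> \<subseteq> SU(2)\<close> there are split exact
  sequences \<open>0 \<rightarrow> S\<^sup>n\<^sup>-\<^sup>2(3) \<rightarrow> S\<^sup>n(3) \<rightarrow> S\<^sup>2\<^sup>n(2) \<rightarrow> 0\<close> of \<open>\<Gamma>\<close>-modules, hence
  \<open>dim Hom(i, S\<^sup>n 3) = dim Hom(i, S\<^sup>2\<^sup>n 2) + dim Hom(i, S\<^sup>n\<^sup>-\<^sup>2 3)\<close>, which is the claimed identity
  of generating functions. If \<open>i\<close> is spinorial, \<open>-I\<close> acts trivially on every \<open>S\<^sup>n(3)\<close> but by \<open>-1\<close>
  on \<open>i\<close>, so all these Hom spaces vanish.

  All identities between maps of symmetric tensors are verified on the associated polynomial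
  functions, which determine a symmetric tensor.\<close>

lemma finite_idx [simp]: "finite (idx m n)"
proof -
  have "idx m n = {xs. set xs \<subseteq> {..<m} \<and> length xs = n}" by (auto simp: idx_def)
  then show ?thesis using finite_lists_length_eq[of "{..<m}" n] by simp
qed

lemma idx_0 [simp]: "idx m 0 = {[]}"
  by (auto simp: idx_def)

lemma idx_Suc: "idx m (Suc n) = (\<lambda>(i, xs). i # xs) ` ({..<m} \<times> idx m n)"
proof (rule set_eqI)
  fix xs show "xs \<in> idx m (Suc n) \<longleftrightarrow> xs \<in> (\<lambda>(i, xs). i # xs) ` ({..<m} \<times> idx m n)"
    by (cases xs) (auto simp: idx_def)
qed

lemma sum_idx_Suc: "(\<Sum>xs\<in>idx m (Suc n). f xs) = (\<Sum>i<m. \<Sum>xs\<in>idx m n. f (i # xs))"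
proof -
  have inj: "inj_on (\<lambda>(i, xs). i # xs) ({..<m} \<times> idx m n)" by (auto simp: inj_on_def)
  have "(\<Sum>xs\<in>idx m (Suc n). f xs) = (\<Sum>p\<in>{..<m} \<times> idx m n. f (fst p # snd p))"
    unfolding idx_Suc by (subst sum.reindex[OF inj]) (auto intro!: sum.cong)
  also have "\<dots> = (\<Sum>i<m. \<Sum>xs\<in>idx m n. f (i # xs))"
    by (simp add: sum.cartesian_product split_def)
  finally show ?thesis .
qed

lemma idx_mset_iff:
  assumes "mset xs = mset ys"
  shows "xs \<in> idx m n \<longleftrightarrow> ys \<in> idx m n"
proof -
  have "length xs = length ys" using assms by (rule mset_eq_length)
  moreover have "set xs = set ys" using assms by (metis set_mset_mset)
  ultimately show ?thesis unfolding idx_def by simp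
qed

lemma count_mset_le_idx: "ks \<in> idx m n \<Longrightarrow> count (mset ks) x \<le> n"
  using count_le_size[of "mset ks" x] by (simp add: idx_def)

lemma permute_list_idx:
  assumes "p permutes {..<n}" "xs \<in> idx m n"
  shows "permute_list p xs \<in> idx m n"
  using assms by (auto simp: idx_def)

lemma bij_betw_permute_list_idx:
  assumes p: "p permutes {..<n}"
  shows "bij_betw (permute_list p) (idx m n) (idx m n)"
proof (rule bij_betwI[where g = "permute_list (inv p)"])
  have ip: "inv p permutes {..<n}" using p by (rule permutes_inv)
  show "permute_list p \<in> idx m n \<rightarrow> idx m n" "permute_list (inv p) \<in> idx m n \<rightarrow> idx m n"
    using permute_list_idx[OF p] permute_list_idx[OF ip] by blast+
  fix xs assume "xs \<in> idx m n"
  then have "length xs = n" by (simp add: idx_def)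
  then show "permute_list (inv p) (permute_list p xs) = xs" "permute_list p (permute_list (inv p) xs) = xs"
    using permute_list_compose[of "inv p" xs p] permute_list_compose[of p xs "inv p"] p ip
    by (simp_all add: permutes_inv_o)
qed

lemma SymPowI:
  assumes "\<And>xs. xs \<notin> idx m n \<Longrightarrow> T xs = 0" "\<And>xs ys. mset xs = mset ys \<Longrightarrow> T xs = T ys"
  shows "T \<in> SymPow m n"
  unfolding SymPow_def using assms by blast

lemma SymPow_eq: "T \<in> SymPow m n \<Longrightarrow> mset xs = mset ys \<Longrightarrow> T xs = T ys"
  unfolding SymPow_def by blast

lemma SymPow_out: "T \<in> SymPow m n \<Longrightarrow> xs \<notin> idx m n \<Longrightarrow> T xs = 0"
  unfolding SymPow_def by blast

lemma SymPow_zero [simp]: "(\<lambda>_. 0) \<in> SymPow m n"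
  by (rule SymPowI) auto

lemma SymPow_lincomb:
  assumes "T1 \<in> SymPow m n" "T2 \<in> SymPow m n"
  shows "(\<lambda>xs. c1 * T1 xs + c2 * T2 xs) \<in> SymPow m n"
proof (rule SymPowI)
  fix xs ys :: "nat list" assume e: "mset xs = mset ys"
  show "c1 * T1 xs + c2 * T2 xs = c1 * T1 ys + c2 * T2 ys"
    using SymPow_eq[OF assms(1) e] SymPow_eq[OF assms(2) e] by simp
qed (simp add: SymPow_out[OF assms(1)] SymPow_out[OF assms(2)])

lemma SymPow_add: "T1 \<in> SymPow m n \<Longrightarrow> T2 \<in> SymPow m n \<Longrightarrow> (\<lambda>xs. T1 xs + T2 xs) \<in> SymPow m n"
  using SymPow_lincomb[of T1 m n T2 1 1] by simp

lemma SymPow_diff: "T1 \<in> SymPow m n \<Longrightarrow> T2 \<in> SymPow m n \<Longrightarrow> (\<lambda>xs. T1 xs - T2 xs) \<in> SymPow m n"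
  using SymPow_lincomb[of T1 m n T2 1 "-1"] by simp

lemma SymPow_scale: "T \<in> SymPow m n \<Longrightarrow> (\<lambda>xs. c * T xs) \<in> SymPow m n"
  using SymPow_lincomb[of T m n "\<lambda>_. 0" c 0] by simp

lemma SymPow_sum:
  "finite B \<Longrightarrow> (\<And>b. b \<in> B \<Longrightarrow> T b \<in> SymPow m n) \<Longrightarrow> (\<lambda>xs. \<Sum>b\<in>B. c b * T b xs) \<in> SymPow m n"
  by (induction B rule: finite_induct) (simp_all add: SymPow_add SymPow_scale)

lemma tensor_act_SymPow:
  assumes T: "T \<in> SymPow m n"
  shows "tensor_act m n A T \<in> SymPow m n"
proof (rule SymPowI)
  fix xs ys :: "nat list" assume eq: "mset xs = mset ys"
  show "tensor_act m n A T xs = tensor_act m n A T ys"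
  proof (cases "ys \<in> idx m n")
    case False then show ?thesis using idx_mset_iff[OF eq] by (simp add: tensor_act_def)
  next
    case True
    then have xs: "xs \<in> idx m n" and ly: "length ys = n"
      using idx_mset_iff[OF eq] by (auto simp: idx_def)
    obtain p where p: "p permutes {..<length ys}" "permute_list p ys = xs"
      using mset_eq_permutation[OF eq] by blast
    have pn: "p permutes {..<n}" using p ly by simp
    have "(\<Sum>js\<in>idx m n. (\<Prod>k<n. A (xs!k) (js!k)) * T js)
        = (\<Sum>js\<in>idx m n. (\<Prod>k<n. A (xs!k) (permute_list p js!k)) * T (permute_list p js))"
      using sum.reindex_bij_betw[OF bij_betw_permute_list_idx[OF pn], of "\<lambda>js. (\<Prod>k<n. A (xs!k) (js!k)) * T js"]
      by simp
    also have "\<dots> = (\<Sum>js\<in>idx m n. (\<Prod>k<n. A (ys!k) (js!k)) * T js)"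
    proof (intro sum.cong refl)
      fix js assume "js \<in> idx m n"
      then have lj: "length js = n" by (simp add: idx_def)
      have "T (permute_list p js) = T js"
        using pn lj by (intro SymPow_eq[OF T]) (simp add: mset_permute_list)
      moreover have "(\<Prod>k<n. A (xs!k) (permute_list p js!k)) = (\<Prod>k<n. A (ys!(p k)) (js!(p k)))"
        using p ly pn lj by (intro prod.cong refl) (auto simp: permute_list_nth)
      moreover have "\<dots> = (\<Prod>k<n. A (ys!k) (js!k))"
        using prod.permute[OF pn, of "\<lambda>k. A (ys!k) (js!k)"] by (simp add: comp_def)
      ultimately show "(\<Prod>k<n. A (xs!k) (permute_list p js!k)) * T (permute_list p js)
          = (\<Prod>k<n. A (ys!k) (js!k)) * T js" by simp
    qed
    finally show ?thesis using xs True by (simp add: tensor_act_def)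
  qed
qed (simp add: tensor_act_def)

section \<open>The polynomial function of a tensor\<close>

definition tensor_poly :: "nat \<Rightarrow> nat \<Rightarrow> (nat list \<Rightarrow> complex) \<Rightarrow> (nat \<Rightarrow> complex) \<Rightarrow> complex" where
  "tensor_poly m n T z = (\<Sum>is\<in>idx m n. T is * prod_list (map z is))"

lemma tensor_poly_cong: "(\<And>i. i < m \<Longrightarrow> z i = z' i) \<Longrightarrow> tensor_poly m n T z = tensor_poly m n T z'"
  unfolding tensor_poly_def
  by (intro sum.cong refl arg_cong2[where f = "(*)"] arg_cong[where f = prod_list] map_cong)
     (auto simp: idx_def)

lemma tensor_poly_zero [simp]: "tensor_poly m n (\<lambda>_. 0) z = 0"
  by (simp add: tensor_poly_def)

lemma tensor_poly_add: "tensor_poly m n (\<lambda>xs. T1 xs + T2 xs) z = tensor_poly m n T1 z + tensor_poly m n T2 z"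
  by (simp add: tensor_poly_def algebra_simps sum.distrib)

lemma tensor_poly_diff: "tensor_poly m n (\<lambda>xs. T1 xs - T2 xs) z = tensor_poly m n T1 z - tensor_poly m n T2 z"
  by (simp add: tensor_poly_def algebra_simps sum_subtractf)

lemma tensor_poly_scale: "tensor_poly m n (\<lambda>xs. c * T xs) z = c * tensor_poly m n T z"
  by (simp add: tensor_poly_def algebra_simps sum_distrib_left)

lemma prod_list_map_mset_eq:
  "mset xs = mset ys \<Longrightarrow> prod_list (map z xs) = prod_list (map (z :: nat \<Rightarrow> complex) ys)"
  by (metis mset_map prod_mset_prod_list)

definition transp_apply :: "nat \<Rightarrow> (nat \<Rightarrow> nat \<Rightarrow> complex) \<Rightarrow> (nat \<Rightarrow> complex) \<Rightarrow> nat \<Rightarrow> complex" where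
  "transp_apply m A z j = (\<Sum>i<m. A i j * z i)"

lemma prod_lessThan_eq_prod_list_map2:
  "length xs = n \<Longrightarrow> length ys = n \<Longrightarrow> (\<Prod>k<n. f (xs!k) (ys!k)) = prod_list (map2 f xs ys)"
proof (induction xs arbitrary: ys n)
  case (Cons x xs)
  then obtain y ys' where "ys = y # ys'" "n = Suc (length xs)" "length ys' = length xs"
    by (cases ys) auto
  with Cons.IH[of "length xs" ys'] show ?case
    by (simp add: prod.lessThan_Suc_shift del: prod.lessThan_Suc)
qed simp

lemma tensor_act_prod_list:
  "tensor_act m n A T = (\<lambda>is. if is \<in> idx m n then (\<Sum>js\<in>idx m n. prod_list (map2 A is js) * T js) else 0)"
  unfolding tensor_act_def
  by (intro ext if_cong refl sum.cong, subst prod_lessThan_eq_prod_list_map2) (auto simp: idx_def)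

lemma sum_idx_prod_list_map2:
  "length js = n \<Longrightarrow>
   (\<Sum>is\<in>idx m n. prod_list (map2 A is js) * prod_list (map z is)) = prod_list (map (transp_apply m A z) js)"
proof (induction n arbitrary: js)
  case (Suc n)
  then obtain j js' where js: "js = j # js'" "length js' = n" by (cases js) auto
  have "(\<Sum>is\<in>idx m (Suc n). prod_list (map2 A is js) * prod_list (map z is))
      = (\<Sum>i<m. \<Sum>is\<in>idx m n. (A i j * z i) * (prod_list (map2 A is js') * prod_list (map z is)))"
    unfolding sum_idx_Suc js by (simp add: algebra_simps)
  also have "\<dots> = (\<Sum>i<m. A i j * z i) * (\<Sum>is\<in>idx m n. prod_list (map2 A is js') * prod_list (map z is))"
    by (simp add: sum_product)
  finally show ?case using Suc.IH[OF js(2)] js by (simp add: transp_apply_def)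
qed simp

lemma tensor_poly_tensor_act: "tensor_poly m n (tensor_act m n A T) z = tensor_poly m n T (transp_apply m A z)"
proof -
  have "tensor_poly m n (tensor_act m n A T) z =
     (\<Sum>is\<in>idx m n. \<Sum>js\<in>idx m n. T js * (prod_list (map2 A is js) * prod_list (map z is)))"
    unfolding tensor_poly_def tensor_act_prod_list
    by (auto simp: sum_distrib_right sum_distrib_left mult_ac intro!: sum.cong)
  also have "\<dots> = (\<Sum>js\<in>idx m n. T js * (\<Sum>is\<in>idx m n. prod_list (map2 A is js) * prod_list (map z is)))"
    by (subst sum.swap) (simp add: sum_distrib_left)
  also have "\<dots> = tensor_poly m n T (transp_apply m A z)"
    unfolding tensor_poly_def by (intro sum.cong refl, subst sum_idx_prod_list_map2) (auto simp: idx_def)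
  finally show ?thesis .
qed

definition mset_class :: "nat \<Rightarrow> nat \<Rightarrow> nat list \<Rightarrow> nat list set" where
  "mset_class m n ks = {js\<in>idx m n. mset js = mset ks}"

definition symmetrize :: "nat \<Rightarrow> nat \<Rightarrow> (nat list \<Rightarrow> complex) \<Rightarrow> nat list \<Rightarrow> complex" where
  "symmetrize m n c = (\<lambda>ks. if ks \<in> idx m n
     then (\<Sum>js\<in>mset_class m n ks. c js) / of_nat (card (mset_class m n ks)) else 0)"

lemma symmetrize_SymPow: "symmetrize m n c \<in> SymPow m n"
proof (rule SymPowI)
  fix xs ys :: "nat list" assume e: "mset xs = mset ys"
  show "symmetrize m n c xs = symmetrize m n c ys"
    unfolding symmetrize_def mset_class_def using idx_mset_iff[OF e, of m n] e by simp
qed (simp add: symmetrize_def)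

lemma symmetrize_lincomb:
  "symmetrize m n (\<lambda>xs. c1 * T1 xs + c2 * T2 xs) = (\<lambda>xs. c1 * symmetrize m n T1 xs + c2 * symmetrize m n T2 xs)"
  unfolding symmetrize_def by (auto simp: sum.distrib sum_distrib_left add_divide_distrib)

lemma tensor_poly_symmetrize:
  "tensor_poly m n (symmetrize m n c) z = (\<Sum>ks\<in>idx m n. c ks * prod_list (map z ks))"
proof -
  let ?N = "\<lambda>ks. of_nat (card (mset_class m n ks)) :: complex"
  let ?S = "\<lambda>ks. {js. js \<in> idx m n \<and> mset ks = mset js}"
  have cls: "mset_class m n ks = ?S ks" for ks by (auto simp: mset_class_def)
  have "tensor_poly m n (symmetrize m n c) z = (\<Sum>ks\<in>idx m n. \<Sum>js\<in>?S ks. c js * prod_list (map z js) / ?N js)"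
    unfolding tensor_poly_def
  proof (intro sum.cong refl)
    fix ks assume ks: "ks \<in> idx m n"
    have "symmetrize m n c ks * prod_list (map z ks) = (\<Sum>js\<in>?S ks. c js * prod_list (map z ks) / ?N ks)"
      using ks by (simp add: symmetrize_def cls sum_divide_distrib sum_distrib_right)
    also have "\<dots> = (\<Sum>js\<in>?S ks. c js * prod_list (map z js) / ?N js)"
      by (intro sum.cong refl) (auto simp: mset_class_def dest: prod_list_map_mset_eq[of _ _ z])
    finally show "symmetrize m n c ks * prod_list (map z ks) = (\<Sum>js\<in>?S ks. c js * prod_list (map z js) / ?N js)" .
  qed
  also have "\<dots> = (\<Sum>js\<in>idx m n. \<Sum>ks\<in>{ks. ks \<in> idx m n \<and> mset ks = mset js}. c js * prod_list (map z js) / ?N js)"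
    by (rule sum.swap_restrict) auto
  also have "\<dots> = (\<Sum>js\<in>idx m n. c js * prod_list (map z js))"
  proof (intro sum.cong refl)
    fix js assume "js \<in> idx m n"
    moreover have "{ks. ks \<in> idx m n \<and> mset ks = mset js} = mset_class m n js"
      by (auto simp: mset_class_def)
    ultimately show "(\<Sum>ks\<in>{ks. ks \<in> idx m n \<and> mset ks = mset js}. c js * prod_list (map z js) / ?N js)
        = c js * prod_list (map z js)"
      by (auto simp: mset_class_def card_gt_0_iff)
  qed
  finally show ?thesis .
qed

lemma tensor_poly_symmetrize_indicator:
  assumes "ks \<in> idx m n"
  shows "tensor_poly m n (symmetrize m n (\<lambda>js. if js = ks then 1 else 0)) z = prod_list (map z ks)"
proof -
  have "(\<Sum>js\<in>idx m n. (if js = ks then 1 else 0) * prod_list (map z js))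
      = (\<Sum>js\<in>idx m n. if js = ks then prod_list (map z js) else 0)"
    by (rule sum.cong) auto
  then show ?thesis unfolding tensor_poly_symmetrize using assms by (simp add: sum.delta)
qed

definition pushforward :: "(nat list \<Rightarrow> nat list) \<Rightarrow> nat list set \<Rightarrow> (nat list \<Rightarrow> complex) \<Rightarrow> nat list \<Rightarrow> complex" where
  "pushforward h I c = (\<lambda>w. \<Sum>ks\<in>{ks\<in>I. h ks = w}. c ks)"

lemma pushforward_lincomb:
  "pushforward h I (\<lambda>xs. c1 * T1 xs + c2 * T2 xs) = (\<lambda>xs. c1 * pushforward h I T1 xs + c2 * pushforward h I T2 xs)"
  unfolding pushforward_def by (auto simp: sum.distrib sum_distrib_left)

lemma sum_pushforward:
  assumes "finite I" "finite J" "h ` I \<subseteq> J"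
  shows "(\<Sum>w\<in>J. pushforward h I c w * F w) = (\<Sum>ks\<in>I. c ks * F (h ks))"
proof -
  have "(\<Sum>w\<in>J. pushforward h I c w * F w) = (\<Sum>w\<in>J. \<Sum>ks\<in>{ks\<in>I. h ks = w}. c ks * F (h ks))"
    unfolding pushforward_def sum_distrib_right by (intro sum.cong refl) auto
  also have "\<dots> = (\<Sum>ks\<in>I. c ks * F (h ks))"
    by (rule sum.group[OF assms])
  finally show ?thesis .
qed

section \<open>Symmetric tensors are determined by their polynomial functions\<close>

lemma SymPow_eq_0_if_fiber_sums_eq_0:
  assumes T: "T \<in> SymPow m n"
    and key: "\<And>xs ys. xs \<in> idx m n \<Longrightarrow> ys \<in> idx m n \<Longrightarrow> T xs \<noteq> 0 \<Longrightarrow> T ys \<noteq> 0 \<Longrightarrow>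
                 \<kappa> (mset xs) = \<kappa> (mset ys) \<Longrightarrow> mset xs = mset ys"
    and sums: "\<And>ks. ks \<in> idx m n \<Longrightarrow> (\<Sum>ks'\<in>{ks'\<in>idx m n. \<kappa> (mset ks') = \<kappa> (mset ks)}. T ks') = 0"
  shows "T = (\<lambda>_. 0)"
proof
  fix ks
  show "T ks = 0"
  proof (rule ccontr)
    assume nz: "T ks \<noteq> 0"
    then have ks: "ks \<in> idx m n" using SymPow_out[OF T] by blast
    let ?C = "{ks'\<in>idx m n. mset ks' = mset ks}"
    have "(\<Sum>ks'\<in>{ks'\<in>idx m n. \<kappa> (mset ks') = \<kappa> (mset ks)}. T ks') = sum T ?C"
      using key[OF _ ks _ nz] by (intro sum.mono_neutral_right) auto
    also have "\<dots> = sum (\<lambda>_. T ks) ?C"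
      by (rule sum.cong) (auto intro: SymPow_eq[OF T])
    also have "\<dots> = of_nat (card ?C) * T ks" by simp
    finally have "of_nat (card ?C) * T ks = 0" using sums[OF ks] by simp
    moreover have "card ?C \<noteq> 0" using ks card_0_eq[of ?C] by auto
    ultimately show False using nz by simp
  qed
qed

lemma polyfun_eq_0_cofinite:
  fixes c :: "nat \<Rightarrow> complex"
  assumes "finite F" and "\<And>x. x \<notin> F \<Longrightarrow> (\<Sum>i\<le>n. c i * x^i) = 0"
  shows "\<forall>i\<le>n. c i = 0"
proof (rule ccontr)
  assume "\<not> (\<forall>i\<le>n. c i = 0)"
  then have "finite {z. (\<Sum>i\<le>n. c i * z^i) = 0}" using polyfun_finite_roots[of c n] by blast
  moreover have "- F \<subseteq> {z. (\<Sum>i\<le>n. c i * z^i) = 0}" using assms(2) by auto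
  ultimately have "finite (- F)" by (rule finite_subset[rotated])
  with assms(1) show False using infinite_UNIV_char_0 by (metis Compl_partition2 finite_Un)
qed

lemma finite_square_roots: "finite {a :: complex. a * a = b}"
proof -
  define c :: "nat \<Rightarrow> complex" where "c = (\<lambda>i. if i = 0 then - b else if i = 2 then 1 else 0)"
  have "finite {z. (\<Sum>i\<le>2. c i * z^i) = 0}" using polyfun_finite_roots[of c 2] by (auto simp: c_def)
  moreover have "{a :: complex. a * a = b} \<subseteq> {z. (\<Sum>i\<le>2. c i * z^i) = 0}"
    by (auto simp: c_def numeral_2_eq_2 power2_eq_square)
  ultimately show ?thesis by (rule finite_subset[rotated])
qed

definition chart2 :: "complex \<Rightarrow> nat \<Rightarrow> complex" where
  "chart2 a = (\<lambda>i. if i = 0 then 1 else a)"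

definition chart3 :: "complex \<Rightarrow> complex \<Rightarrow> nat \<Rightarrow> complex" where
  "chart3 a b = (\<lambda>i. if i = 0 then 1 else if i = 1 then a else b)"

lemma prod_list_chart3:
  "set xs \<subseteq> {..<3} \<Longrightarrow> prod_list (map (chart3 a b) xs) = a ^ count (mset xs) 1 * b ^ count (mset xs) 2"
proof (induction xs)
  case (Cons x xs)
  then have "x = 0 \<or> x = 1 \<or> x = 2" by auto
  with Cons show ?case by (auto simp: chart3_def)
qed simp

lemma prod_list_chart2: "set xs \<subseteq> {..<2} \<Longrightarrow> prod_list (map (chart2 a) xs) = a ^ count (mset xs) 1"
proof (induction xs)
  case (Cons x xs)
  then have "x = 0 \<or> x = 1" by auto
  with Cons show ?case by (auto simp: chart2_def)
qed simp

lemma length_eq_counts3: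
  fixes xs :: "nat list"
  shows "set xs \<subseteq> {..<3} \<Longrightarrow> length xs = count (mset xs) 0 + count (mset xs) 1 + count (mset xs) 2"
proof (induction xs)
  case (Cons x xs)
  then have "x = 0 \<or> x = 1 \<or> x = 2" by auto
  with Cons show ?case by auto
qed simp

lemma mset_eq_if_counts3_eq:
  assumes "xs \<in> idx 3 n" "ys \<in> idx 3 n"
    "count (mset xs) 1 = count (mset ys) 1" "count (mset xs) 2 = count (mset ys) 2"
  shows "mset xs = mset ys"
proof (rule multiset_eqI)
  fix x
  have sx: "set xs \<subseteq> {..<3}" and sy: "set ys \<subseteq> {..<3}" and l: "length xs = length ys"
    using assms(1,2) by (auto simp: idx_def)
  show "count (mset xs) x = count (mset ys) x"
  proof (cases "x < 3")
    case True
    then have "x = 0 \<or> x = 1 \<or> x = 2" by auto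
    then show ?thesis using length_eq_counts3[OF sx] length_eq_counts3[OF sy] l assms(3,4) by auto
  next
    case False
    then have "x \<notin> set xs" "x \<notin> set ys" using sx sy by auto
    then show ?thesis by (metis count_mset_0_iff)
  qed
qed

lemma mset_eq_if_counts2_eq:
  assumes "xs \<in> idx 2 n" "ys \<in> idx 2 n" "count (mset xs) 1 = count (mset ys) 1"
  shows "mset xs = mset ys"
proof -
  have c: "xs \<in> idx 3 n" "ys \<in> idx 3 n" "count (mset xs) 2 = 0" "count (mset ys) 2 = 0"
    using assms(1,2) by (auto simp: idx_def)
  show ?thesis by (rule mset_eq_if_counts3_eq[of xs n ys]) (simp_all only: c assms(3))
qed

lemma tensor_poly_chart3:
  "tensor_poly 3 n T (chart3 a b)
     = (\<Sum>i\<le>n. (\<Sum>j\<le>n. (\<Sum>ks\<in>{ks\<in>idx 3 n. (count (mset ks) 1, count (mset ks) 2) = (i, j)}. T ks) * b^j) * a^i)"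
  (is "_ = (\<Sum>i\<le>n. (\<Sum>j\<le>n. ?C i j * b^j) * a^i)")
proof -
  let ?g = "\<lambda>ks. (count (mset ks) 1, count (mset ks) 2)"
  let ?h = "\<lambda>ks. T ks * (a ^ count (mset ks) 1 * b ^ count (mset ks) 2)"
  define C where "C p = (\<Sum>ks\<in>{ks\<in>idx 3 n. ?g ks = p}. T ks)" for p
  have "tensor_poly 3 n T (chart3 a b) = (\<Sum>ks\<in>idx 3 n. ?h ks)"
    unfolding tensor_poly_def by (intro sum.cong refl) (simp add: prod_list_chart3 idx_def)
  also have "\<dots> = (\<Sum>p\<in>{..n}\<times>{..n}. \<Sum>ks\<in>{ks\<in>idx 3 n. ?g ks = p}. ?h ks)"
    by (rule sum.group[symmetric]) (auto simp: count_mset_le_idx)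
  also have "\<dots> = (\<Sum>p\<in>{..n}\<times>{..n}. C p * (a ^ fst p * b ^ snd p))"
    unfolding C_def sum_distrib_right by (intro sum.cong refl) auto
  also have "\<dots> = (\<Sum>i\<le>n. \<Sum>j\<le>n. C (i, j) * (a^i * b^j))"
    by (simp add: sum.cartesian_product split_def)
  finally show ?thesis by (simp add: C_def sum_distrib_left sum_distrib_right mult_ac)
qed

text \<open>For \<open>m = 3\<close> it suffices that the polynomial vanishes off the conic \<open>z\<^sub>0 z\<^sub>2 = z\<^sub>1\<^sup>2\<close>; this is
  what makes multiplication by the discriminant injective.\<close>

lemma SymPow3_eq_0_if_poly_vanishes_off_conic:
  assumes T: "T \<in> SymPow 3 n" and vanish: "\<And>a b. b \<noteq> a * a \<Longrightarrow> tensor_poly 3 n T (chart3 a b) = 0"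
  shows "T = (\<lambda>_. 0)"
proof (rule SymPow_eq_0_if_fiber_sums_eq_0[OF T, where \<kappa> = "\<lambda>M. (count M 1, count M 2)"])
  let ?C = "\<lambda>i j. \<Sum>ks\<in>{ks\<in>idx 3 n. (count (mset ks) 1, count (mset ks) 2) = (i, j)}. T ks"
  have "\<forall>i\<le>n. (\<Sum>j\<le>n. ?C i j * b^j) = 0" for b
    using vanish[of b] by (intro polyfun_eq_0_cofinite[OF finite_square_roots[of b]]) (auto simp: tensor_poly_chart3)
  then have "?C i j = 0" if "i \<le> n" "j \<le> n" for i j
    using polyfun_eq_0[of "\<lambda>j. ?C i j" n] that by blast
  then show "?C (count (mset ks) 1) (count (mset ks) 2) = 0" if "ks \<in> idx 3 n" for ks
    using that by (simp add: count_mset_le_idx)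
qed (rule mset_eq_if_counts3_eq[of _ n]; simp)

lemma SymPow2_eq_0_if_poly_vanishes:
  assumes W: "W \<in> SymPow 2 n" and vanish: "\<And>a. tensor_poly 2 n W (chart2 a) = 0"
  shows "W = (\<lambda>_. 0)"
proof (rule SymPow_eq_0_if_fiber_sums_eq_0[OF W, where \<kappa> = "\<lambda>M. count M 1"])
  let ?C = "\<lambda>i. \<Sum>ks\<in>{ks\<in>idx 2 n. count (mset ks) 1 = i}. W ks"
  have "tensor_poly 2 n W (chart2 a) = (\<Sum>ks\<in>idx 2 n. W ks * a ^ count (mset ks) 1)" for a
    unfolding tensor_poly_def by (intro sum.cong refl) (simp add: prod_list_chart2 idx_def)
  also have "\<dots> a = (\<Sum>i\<in>{..n}. \<Sum>ks\<in>{ks\<in>idx 2 n. count (mset ks) 1 = i}. W ks * a ^ count (mset ks) 1)" for a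
    by (rule sum.group[symmetric]) (auto simp: count_mset_le_idx)
  also have "\<dots> a = (\<Sum>i\<le>n. ?C i * a^i)" for a
    unfolding sum_distrib_right by (intro sum.cong refl) auto
  finally have "?C i = 0" if "i \<le> n" for i
    using polyfun_eq_0[of ?C n] vanish that by auto
  then show "?C (count (mset ks) 1) = 0" if "ks \<in> idx 2 n" for ks
    using that by (simp add: count_mset_le_idx)
qed (rule mset_eq_if_counts2_eq[of _ n]; simp)

lemma SymPow3_eqI:
  assumes "T1 \<in> SymPow 3 n" "T2 \<in> SymPow 3 n" "\<And>z. tensor_poly 3 n T1 z = tensor_poly 3 n T2 z"
  shows "T1 = T2"
proof -
  have "(\<lambda>xs. T1 xs - T2 xs) = (\<lambda>_. 0)"
    by (rule SymPow3_eq_0_if_poly_vanishes_off_conic[OF SymPow_diff[OF assms(1,2)]])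
       (simp add: tensor_poly_diff assms(3))
  then show ?thesis by (simp add: fun_eq_iff)
qed

lemma SymPow2_eqI:
  assumes "T1 \<in> SymPow 2 n" "T2 \<in> SymPow 2 n" "\<And>z. tensor_poly 2 n T1 z = tensor_poly 2 n T2 z"
  shows "T1 = T2"
proof -
  have "(\<lambda>xs. T1 xs - T2 xs) = (\<lambda>_. 0)"
    by (rule SymPow2_eq_0_if_poly_vanishes[OF SymPow_diff[OF assms(1,2)]])
       (simp add: tensor_poly_diff assms(3))
  then show ?thesis by (simp add: fun_eq_iff)
qed

section \<open>Multiplication, polarisation and the discriminant\<close>

definition veronese :: "(nat \<Rightarrow> complex) \<Rightarrow> nat \<Rightarrow> complex" where
  "veronese z = (\<lambda>i. if i = 0 then z 0 * z 0 else if i = 1 then z 0 * z 1 else z 1 * z 1)"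

text \<open>The indices \<open>0, 1, 2\<close> of \<open>S\<^sup>2(\<complex>\<^sup>2)\<close> stand for \<open>x\<^sup>2, xy, y\<^sup>2\<close>; \<open>veronese_idx\<close> spells out the
  corresponding monomial in the indices of \<open>\<complex>\<^sup>2\<close>, and \<open>pairsum\<close> goes back by pairing consecutive
  factors.\<close>

fun veronese_idx :: "nat list \<Rightarrow> nat list" where
  "veronese_idx [] = []"
| "veronese_idx (i # ks) = (if i = 0 then [0, 0] else if i = 1 then [0, 1] else [1, 1]) @ veronese_idx ks"

fun pairsum :: "nat list \<Rightarrow> nat list" where
  "pairsum (u # v # w) = (u + v) # pairsum w"
| "pairsum _ = []"

definition disc :: "(nat \<Rightarrow> complex) \<Rightarrow> complex" where
  "disc z = z 1 * z 1 - z 0 * z 2"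

definition disc_coeff :: "nat \<Rightarrow> nat \<Rightarrow> complex" where
  "disc_coeff i j = (if i = 1 \<and> j = 1 then 1 else if (i = 0 \<and> j = 2) \<or> (i = 2 \<and> j = 0) then - 1/2 else 0)"

definition sym2_mult :: "nat \<Rightarrow> (nat list \<Rightarrow> complex) \<Rightarrow> nat list \<Rightarrow> complex" where
  "sym2_mult n T = symmetrize 2 (2*n) (pushforward veronese_idx (idx 3 n) T)"

definition polarize :: "nat \<Rightarrow> (nat list \<Rightarrow> complex) \<Rightarrow> nat list \<Rightarrow> complex" where
  "polarize n W = symmetrize 3 n (pushforward pairsum (idx 2 (2*n)) W)"

definition disc_mult :: "nat \<Rightarrow> (nat list \<Rightarrow> complex) \<Rightarrow> nat list \<Rightarrow> complex" where
  "disc_mult n T = symmetrize 3 n (\<lambda>ks. case ks of i # j # js \<Rightarrow> disc_coeff i j * T js | _ \<Rightarrow> 0)"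

lemma sym2_mult_SymPow: "sym2_mult n T \<in> SymPow 2 (2*n)"
  by (simp add: sym2_mult_def symmetrize_SymPow)

lemma polarize_SymPow: "polarize n W \<in> SymPow 3 n"
  by (simp add: polarize_def symmetrize_SymPow)

lemma disc_mult_SymPow: "disc_mult n T \<in> SymPow 3 n"
  by (simp add: disc_mult_def symmetrize_SymPow)

lemma veronese_idx_idx: "ks \<in> idx 3 n \<Longrightarrow> veronese_idx ks \<in> idx 2 (2*n)"
proof (induction ks arbitrary: n)
  case (Cons i ks)
  then obtain n' where "n = Suc n'" "ks \<in> idx 3 n'" by (auto simp: idx_def)
  with Cons.IH[of n'] show ?case by (auto simp: idx_def)
qed (simp add: idx_def)

lemma prod_list_veronese_idx: "prod_list (map z (veronese_idx ks)) = prod_list (map (veronese z) ks)"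
  by (induction ks) (auto simp: veronese_def)

lemma idx_2_Suc_cases:
  assumes "w \<in> idx 2 (2 * Suc n)"
  obtains u v w' where "w = u # v # w'" "u < 2" "v < 2" "w' \<in> idx 2 (2*n)"
  using assms by (cases w rule: pairsum.cases) (auto simp: idx_def)

lemma pairsum_idx: "w \<in> idx 2 (2*n) \<Longrightarrow> pairsum w \<in> idx 3 n"
proof (induction n arbitrary: w)
  case (Suc n)
  then obtain u v w' where "w = u # v # w'" "u < 2" "v < 2" "w' \<in> idx 2 (2*n)"
    by (blast elim: idx_2_Suc_cases)
  with Suc.IH[of w'] show ?case by (auto simp: idx_def)
qed (simp add: idx_def)

lemma prod_list_veronese_pairsum:
  "w \<in> idx 2 (2*n) \<Longrightarrow> prod_list (map (veronese z) (pairsum w)) = prod_list (map z w)"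
proof (induction n arbitrary: w)
  case (Suc n)
  then obtain u v w' where w: "w = u # v # w'" "u < 2" "v < 2" "w' \<in> idx 2 (2*n)"
    by (blast elim: idx_2_Suc_cases)
  then have "veronese z (u + v) = z u * z v" by (auto simp: veronese_def less_2_cases_iff)
  with Suc.IH[OF w(4)] w(1) show ?case by simp
qed (simp add: idx_def)

lemma tensor_poly_sym2_mult: "tensor_poly 2 (2*n) (sym2_mult n T) z = tensor_poly 3 n T (veronese z)"
proof -
  have "tensor_poly 2 (2*n) (sym2_mult n T) z
      = (\<Sum>w\<in>idx 2 (2*n). pushforward veronese_idx (idx 3 n) T w * prod_list (map z w))"
    unfolding sym2_mult_def tensor_poly_symmetrize ..
  also have "\<dots> = (\<Sum>ks\<in>idx 3 n. T ks * prod_list (map z (veronese_idx ks)))"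
    by (rule sum_pushforward) (auto simp: veronese_idx_idx)
  finally show ?thesis unfolding tensor_poly_def prod_list_veronese_idx .
qed

lemma tensor_poly_polarize:
  "tensor_poly 3 n (polarize n W) z = (\<Sum>w\<in>idx 2 (2*n). W w * prod_list (map z (pairsum w)))"
  unfolding polarize_def tensor_poly_symmetrize by (rule sum_pushforward) (auto simp: pairsum_idx)

lemma sum_lessThan_3:
  fixes f :: "nat \<Rightarrow> complex"
  shows "(\<Sum>k<3. f k) = f 0 + f 1 + f 2"
  by (simp add: numeral_3_eq_3 numeral_2_eq_2)

lemma sum_lessThan_2:
  fixes f :: "nat \<Rightarrow> complex"
  shows "(\<Sum>k<2. f k) = f 0 + f 1"
  by (simp add: numeral_2_eq_2)

lemma tensor_poly_disc_mult:
  assumes "2 \<le> n"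
  shows "tensor_poly 3 n (disc_mult n T) z = disc z * tensor_poly 3 (n-2) T z"
proof -
  obtain k where n: "n = Suc (Suc k)" using assms by (metis add_2_eq_Suc le_Suc_ex)
  have "tensor_poly 3 n (disc_mult n T) z = (\<Sum>i<3. \<Sum>j<3. \<Sum>js\<in>idx 3 k.
      (case i # j # js of i # j # js \<Rightarrow> disc_coeff i j * T js | _ \<Rightarrow> 0) * prod_list (map z (i # j # js)))"
    unfolding disc_mult_def tensor_poly_symmetrize n sum_idx_Suc ..
  also have "\<dots> = (\<Sum>i<3. \<Sum>j<3. \<Sum>js\<in>idx 3 k. (disc_coeff i j * z i * z j) * (T js * prod_list (map z js)))"
    by (intro sum.cong refl) (simp add: mult_ac)
  also have "\<dots> = (\<Sum>i<3. \<Sum>j<3. (disc_coeff i j * z i * z j) * tensor_poly 3 k T z)"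
    unfolding tensor_poly_def by (simp add: sum_distrib_left)
  also have "\<dots> = (\<Sum>i<3. \<Sum>j<3. disc_coeff i j * z i * z j) * tensor_poly 3 k T z"
    by (simp add: sum_distrib_right)
  finally show ?thesis
    using n by (simp add: sum_lessThan_3 disc_coeff_def disc_def algebra_simps)
qed

definition tensor_linear :: "((nat list \<Rightarrow> complex) \<Rightarrow> nat list \<Rightarrow> complex) \<Rightarrow> bool" where
  "tensor_linear L \<longleftrightarrow>
     (\<forall>c1 c2 T1 T2. L (\<lambda>xs. c1 * T1 xs + c2 * T2 xs) = (\<lambda>xs. c1 * L T1 xs + c2 * L T2 xs))"

lemma tensor_linearD:
  "tensor_linear L \<Longrightarrow> L (\<lambda>xs. c1 * T1 xs + c2 * T2 xs) = (\<lambda>xs. c1 * L T1 xs + c2 * L T2 xs)"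
  by (simp add: tensor_linear_def)

lemma tensor_linear_zero: "tensor_linear L \<Longrightarrow> L (\<lambda>_. 0) = (\<lambda>_. 0)"
  using tensor_linearD[of L 0 "\<lambda>_. 0" 0 "\<lambda>_. 0"] by simp

lemma tensor_linear_add: "tensor_linear L \<Longrightarrow> L (\<lambda>xs. T1 xs + T2 xs) = (\<lambda>xs. L T1 xs + L T2 xs)"
  using tensor_linearD[of L 1 T1 1 T2] by simp

lemma tensor_linear_diff: "tensor_linear L \<Longrightarrow> L (\<lambda>xs. T1 xs - T2 xs) = (\<lambda>xs. L T1 xs - L T2 xs)"
  using tensor_linearD[of L 1 T1 "-1" T2] by simp

lemma tensor_linear_scale: "tensor_linear L \<Longrightarrow> L (\<lambda>xs. c * T xs) = (\<lambda>xs. c * L T xs)"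
  using tensor_linearD[of L c T 0 "\<lambda>_. 0"] tensor_linear_zero[of L] by simp

lemma tensor_linear_sum:
  assumes L: "tensor_linear L" and "finite B"
  shows "L (\<lambda>xs. \<Sum>b\<in>B. c b * T b xs) = (\<lambda>xs. \<Sum>b\<in>B. c b * L (T b) xs)"
  using \<open>finite B\<close>
proof (induction B rule: finite_induct)
  case (insert b B)
  then show ?case using tensor_linearD[OF L, of "c b" "T b" 1] by simp
qed (simp add: tensor_linear_zero[OF L])

lemma tensor_linear_tensor_act: "tensor_linear (tensor_act m n A)"
  unfolding tensor_linear_def tensor_act_def by (auto simp: sum.distrib sum_distrib_left algebra_simps)

lemma tensor_linear_sym2_mult: "tensor_linear (sym2_mult n)"
  unfolding tensor_linear_def sym2_mult_def pushforward_lincomb symmetrize_lincomb by simp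

lemma tensor_linear_polarize: "tensor_linear (polarize n)"
  unfolding tensor_linear_def polarize_def pushforward_lincomb symmetrize_lincomb by simp

lemma tensor_linear_disc_mult: "tensor_linear (disc_mult n)"
proof -
  have "(\<lambda>ks. case ks of i # j # js \<Rightarrow> disc_coeff i j * (c1 * T1 js + c2 * T2 js) | _ \<Rightarrow> 0)
      = (\<lambda>ks. c1 * (case ks of i # j # js \<Rightarrow> disc_coeff i j * T1 js | _ \<Rightarrow> 0)
            + c2 * (case ks of i # j # js \<Rightarrow> disc_coeff i j * T2 js | _ \<Rightarrow> 0))" for c1 c2 T1 T2
  proof
    fix ks :: "nat list"
    show "(case ks of i # j # js \<Rightarrow> disc_coeff i j * (c1 * T1 js + c2 * T2 js) | _ \<Rightarrow> 0) =
        c1 * (case ks of i # j # js \<Rightarrow> disc_coeff i j * T1 js | _ \<Rightarrow> 0)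
        + c2 * (case ks of i # j # js \<Rightarrow> disc_coeff i j * T2 js | _ \<Rightarrow> 0)"
      by (cases ks rule: pairsum.cases) (auto simp: algebra_simps)
  qed
  then show ?thesis unfolding tensor_linear_def disc_mult_def symmetrize_lincomb[symmetric] by simp
qed

lemma std_mat_simps:
  "std_mat g 0 0 = g$1$1" "std_mat g 0 1 = g$1$2" "std_mat g 1 0 = g$2$1" "std_mat g 1 1 = g$2$2"
  by (simp_all add: std_mat_def)

lemma sym2_mat_simps:
  "sym2_mat g 0 0 = (g$1$1)^2" "sym2_mat g 0 1 = g$1$1 * g$1$2" "sym2_mat g 0 2 = (g$1$2)^2"
  "sym2_mat g 1 0 = 2 * g$1$1 * g$2$1" "sym2_mat g 1 1 = g$1$1 * g$2$2 + g$1$2 * g$2$1"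
  "sym2_mat g 1 2 = 2 * g$1$2 * g$2$2"
  "sym2_mat g 2 0 = (g$2$1)^2" "sym2_mat g 2 1 = g$2$1 * g$2$2" "sym2_mat g 2 2 = (g$2$2)^2"
  by (simp_all add: sym2_mat_def Let_def numeral_2_eq_2)

lemma less_3_cases: "(i::nat) < 3 \<Longrightarrow> i = 0 \<or> i = 1 \<or> i = 2" by auto

lemmas matrix_entry_simps =
  sum_lessThan_3 sum_lessThan_2 std_mat_simps sym2_mat_simps
  std_mat_simps[unfolded One_nat_def] sym2_mat_simps[unfolded One_nat_def]

lemma transp_apply_sym2_veronese:
  "i < 3 \<Longrightarrow> transp_apply 3 (sym2_mat g) (veronese z) i = veronese (transp_apply 2 (std_mat g) z) i"
  by (drule less_3_cases)
     (auto simp: transp_apply_def veronese_def matrix_entry_simps power2_eq_square algebra_simps)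

lemma transp_apply_sym2_pairsum:
  "a < 2 \<Longrightarrow> b < 2 \<Longrightarrow>
   (\<Sum>u<2. \<Sum>v<2. std_mat g u a * std_mat g v b * z (u + v)) = transp_apply 3 (sym2_mat g) z (a + b)"
  by (drule less_2_cases, drule less_2_cases)
     (auto simp: numeral_2_eq_2[symmetric] transp_apply_def matrix_entry_simps power2_eq_square algebra_simps)

lemma disc_transp_apply_sym2:
  "disc (transp_apply 3 (sym2_mat g) z) = (g$1$1 * g$2$2 - g$1$2 * g$2$1)^2 * disc z"
  by (simp add: disc_def transp_apply_def matrix_entry_simps power2_eq_square algebra_simps)

lemma sum_idx_pairsum:
  fixes B :: "nat \<Rightarrow> nat \<Rightarrow> complex" and z z' :: "nat \<Rightarrow> complex"
  assumes "w' \<in> idx 2 (2*n)"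
    and pair: "\<And>a b. a < 2 \<Longrightarrow> b < 2 \<Longrightarrow> (\<Sum>u<2. \<Sum>v<2. B u a * B v b * z (u + v)) = z' (a + b)"
  shows "(\<Sum>w\<in>idx 2 (2*n). prod_list (map2 B w w') * prod_list (map z (pairsum w)))
         = prod_list (map z' (pairsum w'))"
  using assms(1)
proof (induction n arbitrary: w')
  case (Suc n)
  then obtain a b w'' where w: "w' = a # b # w''" "a < 2" "b < 2" "w'' \<in> idx 2 (2*n)"
    by (blast elim: idx_2_Suc_cases)
  have "(\<Sum>w\<in>idx 2 (2 * Suc n). prod_list (map2 B w w') * prod_list (map z (pairsum w)))
     = (\<Sum>u<2. \<Sum>v<2. (B u a * B v b * z (u + v)) *
           (\<Sum>w\<in>idx 2 (2*n). prod_list (map2 B w w'') * prod_list (map z (pairsum w))))"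
    unfolding mult_2 add_Suc_right add_Suc sum_idx_Suc w(1)
    by (simp add: sum_distrib_left mult_ac)
  also have "\<dots> = (\<Sum>u<2. \<Sum>v<2. B u a * B v b * z (u + v)) * prod_list (map z' (pairsum w''))"
    using Suc.IH[OF w(4)] by (simp add: sum_distrib_right)
  also have "\<dots> = prod_list (map z' (pairsum w'))"
    using pair[OF w(2,3)] w(1) by simp
  finally show ?case .
next
  case 0
  then have "w' = []" by (simp add: idx_def)
  then show ?case by simp
qed

lemma polarize_equivariant:
  "polarize n (tensor_act 2 (2*n) (std_mat g) W) = tensor_act 3 n (sym2_mat g) (polarize n W)"
proof (rule SymPow3_eqI[OF polarize_SymPow tensor_act_SymPow[OF polarize_SymPow]])
  fix z
  let ?I = "idx 2 (2*n)"
  have "tensor_poly 3 n (polarize n (tensor_act 2 (2*n) (std_mat g) W)) z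
      = (\<Sum>w'\<in>?I. W w' * (\<Sum>w\<in>?I. prod_list (map2 (std_mat g) w w') * prod_list (map z (pairsum w))))"
    unfolding tensor_poly_polarize tensor_act_prod_list
    by (simp add: sum_distrib_left sum_distrib_right mult_ac) (rule sum.swap)
  also have "\<dots> = (\<Sum>w'\<in>?I. W w' * prod_list (map (transp_apply 3 (sym2_mat g) z) (pairsum w')))"
    by (intro sum.cong refl arg_cong2[where f = "(*)"] sum_idx_pairsum transp_apply_sym2_pairsum) auto
  finally show "tensor_poly 3 n (polarize n (tensor_act 2 (2*n) (std_mat g) W)) z
      = tensor_poly 3 n (tensor_act 3 n (sym2_mat g) (polarize n W)) z"
    unfolding tensor_poly_tensor_act tensor_poly_polarize .
qed

lemma sym2_mult_equivariant:
  "sym2_mult n (tensor_act 3 n (sym2_mat g) T) = tensor_act 2 (2*n) (std_mat g) (sym2_mult n T)"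
proof (rule SymPow2_eqI[OF sym2_mult_SymPow tensor_act_SymPow[OF sym2_mult_SymPow]])
  fix z
  have "tensor_poly 3 n T (transp_apply 3 (sym2_mat g) (veronese z))
      = tensor_poly 3 n T (veronese (transp_apply 2 (std_mat g) z))"
    by (rule tensor_poly_cong) (rule transp_apply_sym2_veronese)
  then show "tensor_poly 2 (2*n) (sym2_mult n (tensor_act 3 n (sym2_mat g) T)) z
      = tensor_poly 2 (2*n) (tensor_act 2 (2*n) (std_mat g) (sym2_mult n T)) z"
    unfolding tensor_poly_sym2_mult tensor_poly_tensor_act .
qed

lemma disc_mult_equivariant:
  assumes "2 \<le> n" and "g$1$1 * g$2$2 - g$1$2 * g$2$1 = 1"
  shows "disc_mult n (tensor_act 3 (n-2) (sym2_mat g) T) = tensor_act 3 n (sym2_mat g) (disc_mult n T)"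
  using assms
  by (intro SymPow3_eqI[OF disc_mult_SymPow tensor_act_SymPow[OF disc_mult_SymPow]])
     (simp add: tensor_poly_disc_mult tensor_poly_tensor_act disc_transp_apply_sym2)

lemma tensor_act_sym2_neg_one:
  assumes T: "T \<in> SymPow 3 n"
  shows "tensor_act 3 n (sym2_mat (- mat 1)) T = T"
proof (rule SymPow3_eqI[OF tensor_act_SymPow[OF T] T])
  fix z
  have "tensor_poly 3 n T (transp_apply 3 (sym2_mat (- mat 1)) z) = tensor_poly 3 n T z"
    by (rule tensor_poly_cong, drule less_3_cases) (auto simp: transp_apply_def matrix_entry_simps mat_def)
  then show "tensor_poly 3 n (tensor_act 3 n (sym2_mat (- mat 1)) T) z = tensor_poly 3 n T z"
    unfolding tensor_poly_tensor_act .
qed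

lemma sym2_mult_polarize:
  assumes W: "W \<in> SymPow 2 (2*n)"
  shows "sym2_mult n (polarize n W) = W"
proof (rule SymPow2_eqI[OF sym2_mult_SymPow W])
  fix z
  have "tensor_poly 2 (2*n) (sym2_mult n (polarize n W)) z
      = (\<Sum>w\<in>idx 2 (2*n). W w * prod_list (map (veronese z) (pairsum w)))"
    unfolding tensor_poly_sym2_mult tensor_poly_polarize ..
  also have "\<dots> = tensor_poly 2 (2*n) W z"
    unfolding tensor_poly_def by (intro sum.cong refl) (simp add: prod_list_veronese_pairsum)
  finally show "tensor_poly 2 (2*n) (sym2_mult n (polarize n W)) z = tensor_poly 2 (2*n) W z" .
qed

lemma sym2_mult_disc_mult: "2 \<le> n \<Longrightarrow> sym2_mult n (disc_mult n T) = (\<lambda>_. 0)"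
  by (rule SymPow2_eqI[OF sym2_mult_SymPow SymPow_zero])
     (simp add: tensor_poly_sym2_mult tensor_poly_disc_mult disc_def veronese_def)

lemma disc_mult_eq_0_imp:
  assumes "2 \<le> n" and T: "T \<in> SymPow 3 (n-2)" and "disc_mult n T = (\<lambda>_. 0)"
  shows "T = (\<lambda>_. 0)"
proof (rule SymPow3_eq_0_if_poly_vanishes_off_conic[OF T])
  fix a b :: complex assume "b \<noteq> a * a"
  then have "disc (chart3 a b) \<noteq> 0" by (simp add: disc_def chart3_def)
  moreover have "disc (chart3 a b) * tensor_poly 3 (n-2) T (chart3 a b) = 0"
    using tensor_poly_disc_mult[OF assms(1), of T "chart3 a b"] assms(3) by simp
  ultimately show "tensor_poly 3 (n-2) T (chart3 a b) = 0" by simp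
qed

lemma disc_mult_inj:
  assumes "2 \<le> n" "T1 \<in> SymPow 3 (n-2)" "T2 \<in> SymPow 3 (n-2)" "disc_mult n T1 = disc_mult n T2"
  shows "T1 = T2"
proof -
  have "disc_mult n (\<lambda>xs. T1 xs - T2 xs) = (\<lambda>_. 0)"
    using tensor_linear_diff[OF tensor_linear_disc_mult, of n T1 T2] assms(4) by simp
  then have "(\<lambda>xs. T1 xs - T2 xs) = (\<lambda>_. 0)"
    by (rule disc_mult_eq_0_imp[OF assms(1) SymPow_diff[OF assms(2,3)]])
  then show ?thesis by (simp add: fun_eq_iff)
qed

definition z1_square_free :: "(nat list \<Rightarrow> complex) \<Rightarrow> bool" where
  "z1_square_free R \<longleftrightarrow> (\<forall>ks. 2 \<le> count (mset ks) 1 \<longrightarrow> R ks = 0)"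

text \<open>Division with remainder by the discriminant, taking \<open>z\<^sub>1\<^sup>2\<close> as its leading monomial: the
  remainder contains no monomial divisible by \<open>z\<^sub>1\<^sup>2\<close>.\<close>

definition disc_division :: "nat \<Rightarrow> ((nat \<Rightarrow> complex) \<Rightarrow> complex) \<Rightarrow> bool" where
  "disc_division n P \<longleftrightarrow> (\<exists>T R. T \<in> SymPow 3 (n-2) \<and> R \<in> SymPow 3 n \<and> z1_square_free R \<and>
      (\<forall>z. P z = disc z * tensor_poly 3 (n-2) T z + tensor_poly 3 n R z))"

lemma disc_division_zero: "disc_division n (\<lambda>_. 0)"
  unfolding disc_division_def
  by (intro exI[of _ "\<lambda>_. 0"]) (simp add: z1_square_free_def)

lemma disc_division_lincomb:
  assumes "disc_division n P1" "disc_division n P2"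
  shows "disc_division n (\<lambda>z. c1 * P1 z + c2 * P2 z)"
proof -
  obtain T1 R1 where 1: "T1 \<in> SymPow 3 (n-2)" "R1 \<in> SymPow 3 n" "z1_square_free R1"
      "\<And>z. P1 z = disc z * tensor_poly 3 (n-2) T1 z + tensor_poly 3 n R1 z"
    using assms(1) unfolding disc_division_def by blast
  obtain T2 R2 where 2: "T2 \<in> SymPow 3 (n-2)" "R2 \<in> SymPow 3 n" "z1_square_free R2"
      "\<And>z. P2 z = disc z * tensor_poly 3 (n-2) T2 z + tensor_poly 3 n R2 z"
    using assms(2) unfolding disc_division_def by blast
  show ?thesis unfolding disc_division_def
    using 1 2
    by (intro exI[of _ "\<lambda>xs. c1 * T1 xs + c2 * T2 xs"] exI[of _ "\<lambda>xs. c1 * R1 xs + c2 * R2 xs"])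
       (auto simp: SymPow_lincomb z1_square_free_def tensor_poly_add tensor_poly_scale algebra_simps)
qed

lemma z1_square_free_symmetrize_indicator:
  assumes "count (mset ks) 1 \<le> 1"
  shows "z1_square_free (symmetrize m n (\<lambda>js. if js = ks then 1 else 0))"
  using assms unfolding z1_square_free_def symmetrize_def mset_class_def
  by (auto intro!: sum.neutral)

lemma mset_eq_Cons_Cons_remove1:
  "2 \<le> count (mset xs) x \<Longrightarrow> mset xs = mset (x # x # remove1 x (remove1 x xs))"
  by (auto simp: multiset_eq_iff)

lemma disc_division_monomial: "ks \<in> idx 3 n \<Longrightarrow> disc_division n (\<lambda>z. prod_list (map z ks))"
proof (induction "count (mset ks) 1" arbitrary: ks rule: less_induct)
  case less
  show ?case
  proof (cases "count (mset ks) 1 \<le> 1")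
    case True
    then show ?thesis unfolding disc_division_def
      using tensor_poly_symmetrize_indicator[OF less.prems] z1_square_free_symmetrize_indicator[OF True]
      by (intro exI[of _ "\<lambda>_. 0"] exI[of _ "symmetrize 3 n (\<lambda>js. if js = ks then 1 else 0)"])
         (simp add: symmetrize_SymPow)
  next
    case False
    define ks' where "ks' = remove1 1 (remove1 1 ks)"
    have m: "mset ks = mset (1 # 1 # ks')"
      unfolding ks'_def using False by (intro mset_eq_Cons_Cons_remove1) simp
    then have "1 # 1 # ks' \<in> idx 3 n" using less.prems idx_mset_iff by blast
    then have ks': "ks' \<in> idx 3 (n-2)" and ks'': "0 # 2 # ks' \<in> idx 3 n" by (auto simp: idx_def)
    have "count (mset (0 # 2 # ks')) 1 < count (mset ks) 1" using m by simp
    then obtain T R where TR: "T \<in> SymPow 3 (n-2)" "R \<in> SymPow 3 n" "z1_square_free R"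
        "\<And>z. prod_list (map z (0 # 2 # ks')) = disc z * tensor_poly 3 (n-2) T z + tensor_poly 3 n R z"
      using less.hyps[OF _ ks''] unfolding disc_division_def by blast
    let ?T = "\<lambda>xs. symmetrize 3 (n-2) (\<lambda>js. if js = ks' then 1 else 0) xs + T xs"
    have "prod_list (map z ks) = disc z * prod_list (map z ks') + prod_list (map z (0 # 2 # ks'))" for z
      using prod_list_map_mset_eq[OF m, of z] by (simp add: disc_def algebra_simps)
    then have "prod_list (map z ks) = disc z * tensor_poly 3 (n-2) ?T z + tensor_poly 3 n R z" for z
      unfolding tensor_poly_add tensor_poly_symmetrize_indicator[OF ks'] TR(4) by (simp add: algebra_simps)
    then show ?thesis unfolding disc_division_def
      using TR(1-3) by (intro exI[of _ ?T] exI[of _ R]) (simp add: SymPow_add symmetrize_SymPow)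
  qed
qed

lemma disc_division_tensor_poly: "disc_division n (tensor_poly 3 n T)"
proof -
  have "disc_division n (\<lambda>z. \<Sum>ks\<in>S. T ks * prod_list (map z ks))" if "finite S" "S \<subseteq> idx 3 n" for S
    using that
  proof (induction S rule: finite_induct)
    case (insert ks S)
    then show ?case
      using disc_division_lincomb[OF disc_division_monomial, of ks n _ "T ks" 1] by simp
  qed (simp add: disc_division_zero)
  then show ?thesis unfolding tensor_poly_def[abs_def] by simp
qed

lemma z1_square_free_eq_0_if_sym2_mult_eq_0:
  assumes R: "R \<in> SymPow 3 n" and free: "z1_square_free R" and mult: "sym2_mult n R = (\<lambda>_. 0)"
  shows "R = (\<lambda>_. 0)"
proof (rule SymPow_eq_0_if_fiber_sums_eq_0[OF R, where \<kappa> = "\<lambda>M. count M 1 + 2 * count M 2"])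
  let ?e = "\<lambda>ks. count (mset ks) 1 + 2 * count (mset ks) 2"
  let ?C = "\<lambda>e. \<Sum>ks\<in>{ks\<in>idx 3 n. ?e ks = e}. R ks"
  have e_le: "?e ks \<le> 2*n" if "ks \<in> idx 3 n" for ks
    using that length_eq_counts3[of ks] by (auto simp: idx_def)
  have "tensor_poly 3 n R (chart3 a (a*a)) = tensor_poly 2 (2*n) (sym2_mult n R) (chart2 a)" for a
    unfolding tensor_poly_sym2_mult by (rule tensor_poly_cong) (auto simp: veronese_def chart2_def chart3_def)
  then have "0 = (\<Sum>ks\<in>idx 3 n. R ks * a ^ ?e ks)" for a
    unfolding mult tensor_poly_def
    by (auto simp: prod_list_chart3 idx_def power_add power_mult power_mult_distrib[symmetric]
        power2_eq_square[symmetric] intro!: sum.cong)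
  also have "\<dots> a = (\<Sum>e\<in>{..2*n}. \<Sum>ks\<in>{ks\<in>idx 3 n. ?e ks = e}. R ks * a ^ ?e ks)" for a
    using e_le by (intro sum.group[symmetric]) auto
  also have "\<dots> a = (\<Sum>e\<le>2*n. ?C e * a^e)" for a
    unfolding sum_distrib_right by (intro sum.cong refl) auto
  finally have C0: "?C e = 0" if "e \<le> 2*n" for e
    using polyfun_eq_0[of ?C "2*n"] that by auto
  then show "?C (?e ks) = 0" if "ks \<in> idx 3 n" for ks
    using e_le[OF that] .
next
  fix xs ys assume xs: "xs \<in> idx 3 n" and ys: "ys \<in> idx 3 n" and "R xs \<noteq> 0" "R ys \<noteq> 0"
    and e: "count (mset xs) 1 + 2 * count (mset xs) 2 = count (mset ys) 1 + 2 * count (mset ys) 2"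
  have "count (mset xs) 1 \<le> 1" using \<open>R xs \<noteq> 0\<close> free unfolding z1_square_free_def by force
  moreover have "count (mset ys) 1 \<le> 1" using \<open>R ys \<noteq> 0\<close> free unfolding z1_square_free_def by force
  ultimately have "count (mset xs) 1 = count (mset ys) 1" "count (mset xs) 2 = count (mset ys) 2"
    using e by presburger+
  then show "mset xs = mset ys" by (rule mset_eq_if_counts3_eq[OF xs ys])
qed

lemma sym2_mult_kernel:
  assumes n: "2 \<le> n" and T: "T \<in> SymPow 3 n" and mult: "sym2_mult n T = (\<lambda>_. 0)"
  shows "\<exists>T'\<in>SymPow 3 (n-2). T = disc_mult n T'"
proof -
  obtain T' R where TR: "T' \<in> SymPow 3 (n-2)" "R \<in> SymPow 3 n" "z1_square_free R"
      "\<And>z. tensor_poly 3 n T z = disc z * tensor_poly 3 (n-2) T' z + tensor_poly 3 n R z"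
    using disc_division_tensor_poly[of n T] unfolding disc_division_def by blast
  have T_eq: "T = (\<lambda>xs. disc_mult n T' xs + R xs)"
    by (rule SymPow3_eqI[OF T SymPow_add[OF disc_mult_SymPow TR(2)]])
       (simp add: tensor_poly_add tensor_poly_disc_mult[OF n] TR(4))
  have "sym2_mult n R = (\<lambda>_. 0)"
    using mult tensor_linear_add[OF tensor_linear_sym2_mult, of n "disc_mult n T'" R]
    by (simp add: sym2_mult_disc_mult[OF n] flip: T_eq)
  then have "R = (\<lambda>_. 0)" using z1_square_free_eq_0_if_sym2_mult_eq_0 TR(2,3) by blast
  then show ?thesis using T_eq TR(1) by auto
qed

lemma sym2_mult_eq_0_imp_small:
  assumes "n < 2" and T: "T \<in> SymPow 3 n" and "sym2_mult n T = (\<lambda>_. 0)"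
  shows "T = (\<lambda>_. 0)"
proof (rule z1_square_free_eq_0_if_sym2_mult_eq_0[OF T _ assms(3)])
  show "z1_square_free T"
    unfolding z1_square_free_def
    using assms(1) SymPow_out[OF T] count_mset_le_idx[of _ 3 n 1] by force
qed

section \<open>Dimension of a split extension\<close>

context vector_space
begin

lemma dim_zero_space: "dim {0} = 0"
  using dim_span[of "{}"] by (simp add: span_empty dim_eq_card_independent[OF independent_empty])

lemma independent_Un_split_images:
  assumes H1: "subspace H1" and H2: "subspace H2"
    and L1: "Vector_Spaces.linear scale scale L1" and L2: "Vector_Spaces.linear scale scale L2"
    and M: "Vector_Spaces.linear scale scale M"
    and B1: "finite B1" "B1 \<subseteq> H1" "independent B1" and B2: "finite B2" "B2 \<subseteq> H2" "independent B2"
    and ML1: "\<And>x. x \<in> H1 \<Longrightarrow> M (L1 x) = x" and ML2: "\<And>y. y \<in> H2 \<Longrightarrow> M (L2 y) = 0"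
    and inj2: "inj_on L2 H2"
  shows "independent (L1 ` B1 \<union> L2 ` B2)" and "L1 ` B1 \<inter> L2 ` B2 = {}"
    and "inj_on L1 B1" and "inj_on L2 B2"
proof -
  interpret l1: Vector_Spaces.linear scale scale L1 by (rule L1)
  interpret l2: Vector_Spaces.linear scale scale L2 by (rule L2)
  interpret lm: Vector_Spaces.linear scale scale M by (rule M)
  show inj1: "inj_on L1 B1" using ML1 B1(2) by (intro inj_on_inverseI[where g = M]) auto
  show injB2: "inj_on L2 B2" using inj2 B2(2) by (rule inj_on_subset)
  show disj: "L1 ` B1 \<inter> L2 ` B2 = {}"
  proof (rule ccontr)
    assume "L1 ` B1 \<inter> L2 ` B2 \<noteq> {}"
    then obtain x y where "x \<in> B1" "y \<in> B2" "L1 x = L2 y" by blast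
    then have "x = 0" "x \<in> B1" using ML1[of x] ML2[of y] B1(2) B2(2) by auto
    then show False using B1(3) dependent_zero by blast
  qed
  show "independent (L1 ` B1 \<union> L2 ` B2)"
  proof (rule independent_if_scalars_zero)
    fix f x assume sum0: "(\<Sum>x\<in>L1 ` B1 \<union> L2 ` B2. scale (f x) x) = 0" and x: "x \<in> L1 ` B1 \<union> L2 ` B2"
    define X where "X = (\<Sum>b\<in>B1. scale (f (L1 b)) b)"
    define Y where "Y = (\<Sum>b\<in>B2. scale (f (L2 b)) b)"
    have XH: "X \<in> H1" unfolding X_def using B1(2) H1 by (auto intro!: subspace_sum subspace_scale)
    have YH: "Y \<in> H2" unfolding Y_def using B2(2) H2 by (auto intro!: subspace_sum subspace_scale)
    have "L1 X + L2 Y = 0"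
      using sum0 B1(1) B2(1) disj
      by (simp add: X_def Y_def l1.sum l2.sum l1.scale l2.scale sum.union_disjoint
          sum.reindex[OF inj1] sum.reindex[OF injB2])
    moreover have "M (L1 X + L2 Y) = X" using ML1[OF XH] ML2[OF YH] by (simp add: lm.add)
    ultimately have "X = 0" "L2 Y = 0" by simp_all
    moreover have "Y = 0" using \<open>L2 Y = 0\<close> inj2 YH H2 l2.zero subspace_0 by (metis inj_on_def)
    ultimately have "f (L1 b) = 0" if "b \<in> B1" for b
      using independentD[OF B1(3) B1(1) order_refl, of "\<lambda>b. f (L1 b)" b] that unfolding X_def by blast
    moreover have "f (L2 b) = 0" if "b \<in> B2" for b
      using independentD[OF B2(3) B2(1) order_refl, of "\<lambda>b. f (L2 b)" b] \<open>Y = 0\<close> that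
      unfolding Y_def by blast
    ultimately show "f x = 0" using x by blast
  qed (use B1(1) B2(1) in simp)
qed

lemma dim_split_extension:
  assumes H1: "subspace H1" and H2: "subspace H2"
    and F1: "finite F1" "H1 \<subseteq> span F1" and F2: "finite F2" "H2 \<subseteq> span F2"
    and L1: "Vector_Spaces.linear scale scale L1" and L2: "Vector_Spaces.linear scale scale L2"
    and M: "Vector_Spaces.linear scale scale M"
    and im1: "L1 ` H1 \<subseteq> H" and im2: "L2 ` H2 \<subseteq> H"
    and cover: "\<And>h. h \<in> H \<Longrightarrow> \<exists>x\<in>H1. \<exists>y\<in>H2. h = L1 x + L2 y"
    and ML1: "\<And>x. x \<in> H1 \<Longrightarrow> M (L1 x) = x" and ML2: "\<And>y. y \<in> H2 \<Longrightarrow> M (L2 y) = 0"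
    and inj2: "inj_on L2 H2"
  shows "dim H = dim H1 + dim H2"
proof -
  interpret l1: Vector_Spaces.linear scale scale L1 by (rule L1)
  interpret l2: Vector_Spaces.linear scale scale L2 by (rule L2)
  obtain B1 where B1: "B1 \<subseteq> H1" "independent B1" "H1 \<subseteq> span B1" "card B1 = dim H1"
    using basis_exists by blast
  obtain B2 where B2: "B2 \<subseteq> H2" "independent B2" "H2 \<subseteq> span B2" "card B2 = dim H2"
    using basis_exists by blast
  have fin: "finite B1" "finite B2"
    using independent_span_bound[OF F1(1) B1(2)] independent_span_bound[OF F2(1) B2(2)] B1(1) B2(1) F1(2) F2(2)
    by blast+
  note C = independent_Un_split_images[OF H1 H2 L1 L2 M fin(1) B1(1,2) fin(2) B2(1,2) ML1 ML2 inj2]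
  have "H \<subseteq> span (L1 ` B1 \<union> L2 ` B2)"
  proof
    fix h assume "h \<in> H"
    then obtain x y where xy: "x \<in> H1" "y \<in> H2" "h = L1 x + L2 y" using cover by blast
    have "L1 x \<in> span (L1 ` B1)" "L2 y \<in> span (L2 ` B2)"
      using xy(1,2) B1(3) B2(3) l1.span_image l2.span_image by blast+
    then show "h \<in> span (L1 ` B1 \<union> L2 ` B2)"
      using xy(3) span_mono[of _ "L1 ` B1 \<union> L2 ` B2"] by (metis Un_upper1 Un_upper2 span_add subsetD)
  qed
  moreover have "L1 ` B1 \<union> L2 ` B2 \<subseteq> H" using im1 im2 B1(1) B2(1) by blast
  ultimately have "dim H = card (L1 ` B1 \<union> L2 ` B2)" using C(1) by (intro dim_unique) auto
  also have "\<dots> = card B1 + card B2"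
    using C(2-4) fin by (simp add: card_Un_disjoint card_image)
  finally show ?thesis using B1(4) B2(4) by simp
qed

end

lemma HomG_D1: "f \<in> HomG G \<rho> m \<sigma> n \<Longrightarrow> f a \<in> SymPow m n"
  by (simp add: HomG_def)

lemma HomG_D2:
  "f \<in> HomG G \<rho> m \<sigma> n \<Longrightarrow> g \<in> G \<Longrightarrow>
   (\<lambda>xs. \<Sum>b\<in>UNIV. (\<rho> g) $ b $ a * f b xs) = tensor_act m n (\<sigma> g) (f a)"
  by (simp add: HomG_def)

lemma HomG_I:
  assumes "\<And>a. f a \<in> SymPow m n"
    and "\<And>g a. g \<in> G \<Longrightarrow> (\<lambda>xs. \<Sum>b\<in>UNIV. (\<rho> g) $ b $ a * f b xs) = tensor_act m n (\<sigma> g) (f a)"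
  shows "f \<in> HomG G \<rho> m \<sigma> n"
  using assms by (simp add: HomG_def)

lemma HomG_lincomb:
  fixes f h :: "'n::finite \<Rightarrow> nat list \<Rightarrow> complex"
  assumes f: "f \<in> HomG G \<rho> m \<sigma> n" and h: "h \<in> HomG G \<rho> m \<sigma> n"
  shows "(\<lambda>a xs. c1 * f a xs + c2 * h a xs) \<in> HomG G \<rho> m \<sigma> n"
proof (rule HomG_I)
  fix a show "(\<lambda>xs. c1 * f a xs + c2 * h a xs) \<in> SymPow m n"
    by (rule SymPow_lincomb[OF HomG_D1[OF f] HomG_D1[OF h]])
next
  fix g a assume g: "g \<in> G"
  have "(\<lambda>xs. \<Sum>b\<in>UNIV. (\<rho> g) $ b $ a * (c1 * f b xs + c2 * h b xs))
     = (\<lambda>xs. c1 * (\<Sum>b\<in>UNIV. (\<rho> g) $ b $ a * f b xs) + c2 * (\<Sum>b\<in>UNIV. (\<rho> g) $ b $ a * h b xs))"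
    by (simp add: algebra_simps sum.distrib sum_distrib_left)
  also have "\<dots> = (\<lambda>xs. c1 * tensor_act m n (\<sigma> g) (f a) xs + c2 * tensor_act m n (\<sigma> g) (h a) xs)"
    by (simp add: HomG_D2[OF f g, symmetric] HomG_D2[OF h g, symmetric])
  also have "\<dots> = tensor_act m n (\<sigma> g) (\<lambda>xs. c1 * f a xs + c2 * h a xs)"
    by (rule tensor_linearD[OF tensor_linear_tensor_act, symmetric])
  finally show "(\<lambda>xs. \<Sum>b\<in>UNIV. (\<rho> g) $ b $ a * (c1 * f b xs + c2 * h b xs))
      = tensor_act m n (\<sigma> g) (\<lambda>xs. c1 * f a xs + c2 * h a xs)" .
qed

lemma HomG_zero: "(0 :: 'n::finite \<Rightarrow> nat list \<Rightarrow> complex) \<in> HomG G \<rho> m \<sigma> n"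
  using tensor_linear_zero[OF tensor_linear_tensor_act] by (intro HomG_I) (simp_all add: zero_fun_def)

lemma HomG_subspace: "module.subspace fscale (HomG G (\<rho> :: _ \<Rightarrow> complex^'n::finite^'n) m \<sigma> n)"
proof -
  interpret fs: vector_space "fscale :: complex \<Rightarrow> ('n \<Rightarrow> nat list \<Rightarrow> complex) \<Rightarrow> _"
    by (rule fscale_vector_space)
  show ?thesis unfolding fs.subspace_def
  proof (intro conjI ballI allI)
    show "0 \<in> HomG G \<rho> m \<sigma> n" by (rule HomG_zero)
  next
    fix f h assume "f \<in> HomG G \<rho> m \<sigma> n" "h \<in> HomG G \<rho> m \<sigma> n"
    from HomG_lincomb[OF this, of 1 1] show "f + h \<in> HomG G \<rho> m \<sigma> n" by (simp add: plus_fun_def)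
  next
    fix c f assume "f \<in> HomG G \<rho> m \<sigma> n"
    from HomG_lincomb[OF this this, of c 0] show "fscale c f \<in> HomG G \<rho> m \<sigma> n" by (simp add: fscale_def)
  qed
qed

lemma sum_fun_apply2: "(\<Sum>p\<in>P. h p) a xs = (\<Sum>p\<in>P. h p a (xs :: nat list) :: complex)"
  by (induction P rule: infinite_finite_induct) auto

definition unit_hom :: "'n \<times> nat list \<Rightarrow> 'n \<Rightarrow> nat list \<Rightarrow> complex" where
  "unit_hom p = (\<lambda>a xs. if a = fst p \<and> xs = snd p then 1 else 0)"

lemma HomG_subset_span:
  "HomG G (\<rho> :: _ \<Rightarrow> complex^'n::finite^'n) m \<sigma> n \<subseteq> module.span fscale (unit_hom ` (UNIV \<times> idx m n))"
proof
  interpret fs: vector_space "fscale :: complex \<Rightarrow> ('n \<Rightarrow> nat list \<Rightarrow> complex) \<Rightarrow> _"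
    by (rule fscale_vector_space)
  fix f assume f: "f \<in> HomG G \<rho> m \<sigma> n"
  have "f = (\<Sum>p\<in>UNIV \<times> idx m n. fscale (f (fst p) (snd p)) (unit_hom p))"
  proof (intro ext)
    fix a xs
    have "(\<Sum>p\<in>UNIV \<times> idx m n. fscale (f (fst p) (snd p)) (unit_hom p)) a xs
        = (\<Sum>p\<in>UNIV \<times> idx m n. fscale (f (fst p) (snd p)) (unit_hom p) a xs)"
      by (rule sum_fun_apply2)
    also have "\<dots> = (\<Sum>p\<in>UNIV \<times> idx m n. if p = (a, xs) then f a xs else 0)"
      by (intro sum.cong refl) (auto simp: fscale_def unit_hom_def)
    also have "\<dots> = f a xs"
      using SymPow_out[OF HomG_D1[OF f, of a], of xs] by (simp add: sum.delta)
    finally show "f a xs = (\<Sum>p\<in>UNIV \<times> idx m n. fscale (f (fst p) (snd p)) (unit_hom p)) a xs" by simp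
  qed
  also have "\<dots> \<in> fs.span (unit_hom ` (UNIV \<times> idx m n))"
    by (intro fs.span_sum fs.span_scale fs.span_base) auto
  finally show "f \<in> fs.span (unit_hom ` (UNIV \<times> idx m n))" .
qed

definition hom_map :: "((nat list \<Rightarrow> complex) \<Rightarrow> nat list \<Rightarrow> complex) \<Rightarrow> ('n \<Rightarrow> nat list \<Rightarrow> complex)
    \<Rightarrow> 'n \<Rightarrow> nat list \<Rightarrow> complex" where
  "hom_map L f = (\<lambda>a. L (f a))"

lemma linear_hom_map: "tensor_linear L \<Longrightarrow> Vector_Spaces.linear fscale fscale (hom_map L)"
  unfolding Vector_Spaces.linear_iff
  using fscale_vector_space
  by (auto simp: hom_map_def fscale_def plus_fun_def tensor_linear_add tensor_linear_scale)

lemma HomG_hom_map: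
  fixes f :: "'n::finite \<Rightarrow> nat list \<Rightarrow> complex"
  assumes L: "tensor_linear L" and SP: "\<And>T. T \<in> SymPow m n \<Longrightarrow> L T \<in> SymPow m' n'"
    and equiv: "\<And>g T. g \<in> G \<Longrightarrow> T \<in> SymPow m n \<Longrightarrow> L (tensor_act m n (\<sigma> g) T) = tensor_act m' n' (\<tau> g) (L T)"
    and f: "f \<in> HomG G \<rho> m \<sigma> n"
  shows "hom_map L f \<in> HomG G \<rho> m' \<tau> n'"
proof (rule HomG_I)
  fix a show "hom_map L f a \<in> SymPow m' n'" unfolding hom_map_def by (rule SP[OF HomG_D1[OF f]])
next
  fix g a assume g: "g \<in> G"
  have "(\<lambda>xs. \<Sum>b\<in>UNIV. (\<rho> g) $ b $ a * L (f b) xs) = L (\<lambda>xs. \<Sum>b\<in>UNIV. (\<rho> g) $ b $ a * f b xs)"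
    by (rule tensor_linear_sum[OF L finite_class.finite_UNIV, symmetric])
  also have "\<dots> = tensor_act m' n' (\<tau> g) (L (f a))"
    unfolding HomG_D2[OF f g] by (rule equiv[OF g HomG_D1[OF f]])
  finally show "(\<lambda>xs. \<Sum>b\<in>UNIV. (\<rho> g) $ b $ a * hom_map L f b xs) = tensor_act m' n' (\<tau> g) (hom_map L f a)"
    by (simp add: hom_map_def)
qed

lemma HomG_hom_map_reflect:
  fixes F y :: "'n::finite \<Rightarrow> nat list \<Rightarrow> complex"
  assumes L: "tensor_linear L"
    and inj: "\<And>T1 T2. T1 \<in> SymPow m' n' \<Longrightarrow> T2 \<in> SymPow m' n' \<Longrightarrow> L T1 = L T2 \<Longrightarrow> T1 = T2"
    and equiv: "\<And>g T. g \<in> G \<Longrightarrow> T \<in> SymPow m' n' \<Longrightarrow> L (tensor_act m' n' (\<tau> g) T) = tensor_act m n (\<sigma> g) (L T)"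
    and F: "hom_map L y \<in> HomG G \<rho> m \<sigma> n" and y: "\<And>a. y a \<in> SymPow m' n'"
  shows "y \<in> HomG G \<rho> m' \<tau> n'"
proof (rule HomG_I[OF y])
  fix g a assume g: "g \<in> G"
  show "(\<lambda>xs. \<Sum>b\<in>UNIV. (\<rho> g) $ b $ a * y b xs) = tensor_act m' n' (\<tau> g) (y a)"
  proof (rule inj)
    show "(\<lambda>xs. \<Sum>b\<in>UNIV. (\<rho> g) $ b $ a * y b xs) \<in> SymPow m' n'"
      by (rule SymPow_sum) (auto simp: y)
    show "tensor_act m' n' (\<tau> g) (y a) \<in> SymPow m' n'" by (rule tensor_act_SymPow[OF y])
    have "L (\<lambda>xs. \<Sum>b\<in>UNIV. (\<rho> g) $ b $ a * y b xs) = (\<lambda>xs. \<Sum>b\<in>UNIV. (\<rho> g) $ b $ a * hom_map L y b xs)"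
      unfolding hom_map_def by (rule tensor_linear_sum[OF L finite_class.finite_UNIV])
    also have "\<dots> = tensor_act m n (\<sigma> g) (L (y a))"
      using HomG_D2[OF F g] by (simp add: hom_map_def)
    finally show "L (\<lambda>xs. \<Sum>b\<in>UNIV. (\<rho> g) $ b $ a * y b xs) = L (tensor_act m' n' (\<tau> g) (y a))"
      by (simp add: equiv[OF g y])
  qed
qed

lemma HomG_eq_0_if_spinorial:
  assumes "- mat 1 \<in> G" and "\<rho> (- mat 1) = - mat 1"
  shows "HomG G (\<rho> :: _ \<Rightarrow> complex^'n::finite^'n) 3 sym2_mat n = {0}"
proof
  show "{0} \<subseteq> HomG G \<rho> 3 sym2_mat n" using HomG_zero by simp
  show "HomG G \<rho> 3 sym2_mat n \<subseteq> {0}"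
  proof
    fix f assume f: "f \<in> HomG G \<rho> 3 sym2_mat n"
    have "f a xs = 0" for a xs
    proof -
      have "(\<lambda>xs. \<Sum>b\<in>UNIV. (\<rho> (- mat 1)) $ b $ a * f b xs) = f a"
        using HomG_D2[OF f assms(1), of a] tensor_act_sym2_neg_one[OF HomG_D1[OF f]] by simp
      from fun_cong[OF this, of xs] have "(\<Sum>b\<in>UNIV. (\<rho> (- mat 1)) $ b $ a * f b xs) = f a xs"
        by simp
      moreover have "(\<Sum>b\<in>UNIV. (\<rho> (- mat 1)) $ b $ a * f b xs) = - f a xs"
        unfolding assms(2) by (simp add: mat_def if_distrib[of "\<lambda>c. c * _"] sum_negf cong: if_cong)
      ultimately show ?thesis by simp
    qed
    then show "f \<in> {0}" by (simp add: fun_eq_iff)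
  qed
qed

section \<open>The dimension recurrence\<close>

lemma HomG_polarize:
  "x \<in> HomG G \<rho> 2 std_mat (2*n) \<Longrightarrow> hom_map (polarize n) x \<in> HomG G \<rho> 3 sym2_mat n"
  by (rule HomG_hom_map[OF tensor_linear_polarize polarize_SymPow polarize_equivariant])

lemma HomG_sym2_mult:
  "h \<in> HomG G \<rho> 3 sym2_mat n \<Longrightarrow> hom_map (sym2_mult n) h \<in> HomG G \<rho> 2 std_mat (2*n)"
  by (rule HomG_hom_map[OF tensor_linear_sym2_mult sym2_mult_SymPow sym2_mult_equivariant])

lemma HomG_disc_mult:
  assumes "2 \<le> n" and det: "\<And>g. g \<in> G \<Longrightarrow> g$1$1 * g$2$2 - g$1$2 * g$2$1 = 1"
  shows "y \<in> HomG G \<rho> 3 sym2_mat (n-2) \<Longrightarrow> hom_map (disc_mult n) y \<in> HomG G \<rho> 3 sym2_mat n"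
  by (rule HomG_hom_map[OF tensor_linear_disc_mult disc_mult_SymPow disc_mult_equivariant[OF assms(1) det]])

lemma HomG_sym2_mult_remainder:
  fixes h :: "'n::finite \<Rightarrow> nat list \<Rightarrow> complex"
  assumes h: "h \<in> HomG G \<rho> 3 sym2_mat n"
  defines "F \<equiv> h - hom_map (polarize n) (hom_map (sym2_mult n) h)"
  shows "F \<in> HomG G \<rho> 3 sym2_mat n" and "sym2_mult n (F a) = (\<lambda>_. 0)"
proof -
  interpret fs: vector_space "fscale :: complex \<Rightarrow> ('n \<Rightarrow> nat list \<Rightarrow> complex) \<Rightarrow> _"
    by (rule fscale_vector_space)
  show "F \<in> HomG G \<rho> 3 sym2_mat n"
    unfolding F_def using HomG_polarize[OF HomG_sym2_mult[OF h]] h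
    by (intro fs.subspace_diff[OF HomG_subspace])
  have "F a = (\<lambda>xs. h a xs - polarize n (sym2_mult n (h a)) xs)"
    by (simp add: F_def hom_map_def fun_diff_def)
  then show "sym2_mult n (F a) = (\<lambda>_. 0)"
    using tensor_linear_diff[OF tensor_linear_sym2_mult, of n "h a" "polarize n (sym2_mult n (h a))"]
      sym2_mult_polarize[OF sym2_mult_SymPow, of n "h a"]
    by simp
qed

lemma HomG_sym2_decompose:
  fixes h :: "'n::finite \<Rightarrow> nat list \<Rightarrow> complex"
  assumes n: "2 \<le> n" and det: "\<And>g. g \<in> G \<Longrightarrow> g$1$1 * g$2$2 - g$1$2 * g$2$1 = 1"
    and h: "h \<in> HomG G \<rho> 3 sym2_mat n"
  shows "\<exists>x\<in>HomG G \<rho> 2 std_mat (2*n). \<exists>y\<in>HomG G \<rho> 3 sym2_mat (n-2).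
           h = hom_map (polarize n) x + hom_map (disc_mult n) y"
proof -
  define F where "F = h - hom_map (polarize n) (hom_map (sym2_mult n) h)"
  note F = HomG_sym2_mult_remainder[OF h, folded F_def]
  have "\<exists>T\<in>SymPow 3 (n-2). F a = disc_mult n T" for a
    using sym2_mult_kernel[OF n HomG_D1[OF F(1)] F(2)] .
  then obtain y where y: "\<And>a. y a \<in> SymPow 3 (n-2)" "\<And>a. F a = disc_mult n (y a)"
    by metis
  have Fy: "hom_map (disc_mult n) y = F" using y(2) by (simp add: hom_map_def fun_eq_iff)
  have "y \<in> HomG G \<rho> 3 sym2_mat (n-2)"
    by (rule HomG_hom_map_reflect[OF tensor_linear_disc_mult disc_mult_inj[OF n] disc_mult_equivariant[OF n det]])
       (simp_all add: Fy F(1) y(1))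
  moreover have "h = hom_map (polarize n) (hom_map (sym2_mult n) h) + hom_map (disc_mult n) y"
    by (simp add: Fy F_def)
  ultimately show ?thesis using HomG_sym2_mult[OF h] by blast
qed

lemma HomG_sym2_small:
  fixes h :: "'n::finite \<Rightarrow> nat list \<Rightarrow> complex"
  assumes "n < 2" and h: "h \<in> HomG G \<rho> 3 sym2_mat n"
  shows "h = hom_map (polarize n) (hom_map (sym2_mult n) h)"
proof -
  note F = HomG_sym2_mult_remainder[OF h]
  have "h - hom_map (polarize n) (hom_map (sym2_mult n) h) = 0"
    using sym2_mult_eq_0_imp_small[OF assms(1) HomG_D1[OF F(1)] F(2)] by (simp add: fun_eq_iff)
  then show ?thesis by simp
qed

lemma inj_on_hom_map_disc_mult:
  assumes n: "2 \<le> n"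
  shows "inj_on (hom_map (disc_mult n)) (HomG G \<rho> 3 sym2_mat (n-2))"
proof (rule inj_onI)
  fix y1 y2 assume y1: "y1 \<in> HomG G \<rho> 3 sym2_mat (n-2)" and y2: "y2 \<in> HomG G \<rho> 3 sym2_mat (n-2)"
    and "hom_map (disc_mult n) y1 = hom_map (disc_mult n) y2"
  then have "disc_mult n (y1 a) = disc_mult n (y2 a)" for a by (metis hom_map_def)
  then show "y1 = y2" using disc_mult_inj[OF n HomG_D1[OF y1] HomG_D1[OF y2]] by blast
qed

lemma dim_HomG_sym2_ge_2:
  fixes \<rho> :: "complex^2^2 \<Rightarrow> complex^'n::finite^'n"
  assumes n: "2 \<le> n" and det: "\<And>g. g \<in> G \<Longrightarrow> g$1$1 * g$2$2 - g$1$2 * g$2$1 = 1"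
  shows "vector_space.dim fscale (HomG G \<rho> 3 sym2_mat n) =
         vector_space.dim fscale (HomG G \<rho> 2 std_mat (2*n)) + vector_space.dim fscale (HomG G \<rho> 3 sym2_mat (n-2))"
proof -
  interpret fs: vector_space "fscale :: complex \<Rightarrow> ('n \<Rightarrow> nat list \<Rightarrow> complex) \<Rightarrow> _"
    by (rule fscale_vector_space)
  have fin: "finite (unit_hom ` (UNIV \<times> idx m k) :: ('n \<Rightarrow> nat list \<Rightarrow> complex) set)" for m k
    by simp
  have "hom_map (polarize n) ` HomG G \<rho> 2 std_mat (2*n) \<subseteq> HomG G \<rho> 3 sym2_mat n"
    and "hom_map (disc_mult n) ` HomG G \<rho> 3 sym2_mat (n-2) \<subseteq> HomG G \<rho> 3 sym2_mat n"
    using HomG_polarize HomG_disc_mult[OF n det] by blast+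
  then show ?thesis
  proof (rule fs.dim_split_extension[OF HomG_subspace HomG_subspace fin HomG_subset_span fin HomG_subset_span
        linear_hom_map[OF tensor_linear_polarize] linear_hom_map[OF tensor_linear_disc_mult]
        linear_hom_map[OF tensor_linear_sym2_mult] _ _ HomG_sym2_decompose[OF n det]
        _ _ inj_on_hom_map_disc_mult[OF n]])
    show "hom_map (sym2_mult n) (hom_map (polarize n) x) = x" if "x \<in> HomG G \<rho> 2 std_mat (2*n)" for x
      using sym2_mult_polarize[OF HomG_D1[OF that]] by (simp add: hom_map_def)
    show "hom_map (sym2_mult n) (hom_map (disc_mult n) y) = 0" for y :: "'n \<Rightarrow> nat list \<Rightarrow> complex"
      using sym2_mult_disc_mult[OF n] by (simp add: hom_map_def zero_fun_def)
  qed
qed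

lemma dim_HomG_sym2_lt_2:
  fixes \<rho> :: "complex^2^2 \<Rightarrow> complex^'n::finite^'n"
  assumes n: "n < 2"
  shows "vector_space.dim fscale (HomG G \<rho> 3 sym2_mat n) = vector_space.dim fscale (HomG G \<rho> 2 std_mat (2*n))"
proof -
  interpret fs: vector_space "fscale :: complex \<Rightarrow> ('n \<Rightarrow> nat list \<Rightarrow> complex) \<Rightarrow> _"
    by (rule fscale_vector_space)
  have fin: "finite (unit_hom ` (UNIV \<times> idx 2 (2*n)) :: ('n \<Rightarrow> nat list \<Rightarrow> complex) set)" by simp
  have cover: "\<exists>x\<in>HomG G \<rho> 2 std_mat (2*n). \<exists>y\<in>{0}. h = hom_map (polarize n) x + id y"
    if "h \<in> HomG G \<rho> 3 sym2_mat n" for h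
    using HomG_sym2_small[OF n that] HomG_sym2_mult[OF that] by force
  have "{0} \<subseteq> fs.span ({} :: ('n \<Rightarrow> nat list \<Rightarrow> complex) set)" by (simp add: fs.span_empty)
  then have "fs.dim (HomG G \<rho> 3 sym2_mat n) = fs.dim (HomG G \<rho> 2 std_mat (2*n)) + fs.dim {0}"
  proof (rule fs.dim_split_extension[OF HomG_subspace fs.subspace_single_0 fin HomG_subset_span finite.emptyI _
        linear_hom_map[OF tensor_linear_polarize] fs.linear_id linear_hom_map[OF tensor_linear_sym2_mult]
        _ _ cover])
    show "hom_map (sym2_mult n) (hom_map (polarize n) x) = x" if "x \<in> HomG G \<rho> 2 std_mat (2*n)" for x
      using sym2_mult_polarize[OF HomG_D1[OF that]] by (simp add: hom_map_def)
    show "hom_map (sym2_mult n) (id y) = 0" if "y \<in> {0}" for y :: "'n \<Rightarrow> nat list \<Rightarrow> complex"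
      using that tensor_linear_zero[OF tensor_linear_sym2_mult] by (simp add: hom_map_def zero_fun_def)
  qed (auto simp: HomG_zero intro: HomG_polarize)
  then show ?thesis by (simp add: fs.dim_zero_space)
qed

lemma dim_HomG_sym2:
  fixes \<rho> :: "complex^2^2 \<Rightarrow> complex^'n::finite^'n"
  assumes "\<And>g. g \<in> G \<Longrightarrow> g$1$1 * g$2$2 - g$1$2 * g$2$1 = 1"
  shows "vector_space.dim fscale (HomG G \<rho> 3 sym2_mat n) = vector_space.dim fscale (HomG G \<rho> 2 std_mat (2*n))
           + (if 2 \<le> n then vector_space.dim fscale (HomG G \<rho> 3 sym2_mat (n-2)) else 0)"
proof (cases "2 \<le> n")
  case True
  then show ?thesis using dim_HomG_sym2_ge_2[OF True assms] by simp
next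
  case False
  then show ?thesis using dim_HomG_sym2_lt_2[of n G \<rho>] by simp
qed

lemma fps_eq_mult_inverse_if_recurrence:
  fixes f e :: "'a::field fps"
  assumes rec: "\<And>n. fps_nth f n = fps_nth e n + (if 2 \<le> n then fps_nth f (n-2) else 0)"
  shows "f = e * inverse (1 - fps_X ^ 2)"
proof -
  have "f * (1 - fps_X ^ 2) = e"
  proof (rule fps_ext)
    fix n
    have "fps_nth (f * (1 - fps_X ^ 2)) n = fps_nth f n - (if n < 2 then 0 else fps_nth f (n-2))"
      by (simp add: right_diff_distrib fps_X_power_mult_right_nth)
    then show "fps_nth (f * (1 - fps_X ^ 2)) n = fps_nth e n" using rec[of n] by auto
  qed
  moreover have "(1 - fps_X ^ 2 :: 'a fps) * inverse (1 - fps_X ^ 2) = 1"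
    by (rule inverse_mult_eq_1') simp
  ultimately show ?thesis by (metis mult.assoc mult.right_neutral)
qed

section \<open>The binary polyhedral groups\<close>

lemma quat_mat_det:
  "quat_mat q $ 1 $ 1 * quat_mat q $ 2 $ 2 - quat_mat q $ 1 $ 2 * quat_mat q $ 2 $ 1
   = complex_of_real ((q 0)^2 + (q 1)^2 + (q 2)^2 + (q 3)^2)"
  by (simp add: quat_mat_def complex_eq_iff power2_eq_square)

lemma sum_lessThan_4:
  fixes f :: "nat \<Rightarrow> real"
  shows "(\<Sum>i<4. f i) = f 0 + f 1 + f 2 + f 3"
  by (simp add: numeral_eq_Suc)

lemma golden_square: "golden^2 = golden + 1"
  unfolding golden_def by (simp add: power2_eq_square field_simps)

lemma icosa_norm: "(\<Sum>i<4. ([0, 1/2, 1 / (2 * golden), golden / 2] ! i)^2) = (1::real)"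
proof -
  have "golden > 0" unfolding golden_def by (simp add: add_pos_nonneg)
  then have inv: "1 / golden = golden - 1"
    using golden_square by (simp add: field_simps power2_eq_square)
  have "(1 / (2 * golden))^2 = (1 / golden)^2 / 4" by (simp add: power2_eq_square)
  also have "\<dots> = (golden - 1)^2 / 4" by (simp only: inv)
  finally have "(\<Sum>i<4. ([0, 1/2, 1 / (2 * golden), golden / 2] ! i)^2) = 1/4 + (golden - 1)^2/4 + golden^2/4"
    by (simp add: sum_lessThan_4 power_divide numeral_eq_Suc)
  also have "\<dots> = (1 + ((golden - 1)^2 + golden^2)) / 4" by (simp add: field_simps)
  also have "(golden - 1)^2 + golden^2 = 2 * golden^2 - 2 * golden + 1"
    by (simp add: power2_eq_square algebra_simps)
  also have "\<dots> = 3" using golden_square by simp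
  finally show ?thesis by simp
qed

lemma unit_quaternions_norm:
  assumes "q \<in> hurwitz_units \<union> octa_extra \<union> icosa_extra"
  shows "(q 0)^2 + (q 1)^2 + (q 2)^2 + (q 3)^2 = 1"
proof -
  have sq: "x^2 = c^2" if "\<bar>x\<bar> = c" for x c :: real using that power2_abs[of x] by simp
  have "(\<Sum>i<4. (q i)^2) = 1"
    using assms unfolding hurwitz_units_def octa_extra_def icosa_extra_def
  proof (elim UnE CollectE disjE exE conjE)
    fix a assume a: "a < 4" "\<bar>q a\<bar> = 1" "\<forall>b<4. b \<noteq> a \<longrightarrow> q b = 0"
    have "(\<Sum>i<4. (q i)^2) = (\<Sum>i<4. if i = a then 1 else 0)"
      using a sq[OF a(2)] by (intro sum.cong) auto
    then show ?thesis using a(1) by simp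
  next
    assume "\<forall>a<4. \<bar>q a\<bar> = 1/2"
    then have "(\<Sum>i<4. (q i)^2) = (\<Sum>i<(4::nat). (1/2)^2)" by (intro sum.cong refl sq) auto
    then show ?thesis by (simp add: power_divide)
  next
    fix a b assume ab: "a < 4" "b < 4" "a \<noteq> b" "\<bar>q a\<bar> = 1 / sqrt 2" "\<bar>q b\<bar> = 1 / sqrt 2"
      "\<forall>c<4. c \<noteq> a \<and> c \<noteq> b \<longrightarrow> q c = 0"
    have "(\<Sum>i<4. (q i)^2) = (\<Sum>i<4. if i = a then 1/2 else 0) + (\<Sum>i<4. if i = b then 1/2 else 0)"
      unfolding sum.distrib[symmetric]
      using ab sq[OF ab(4)] sq[OF ab(5)] by (intro sum.cong) (auto simp: power_divide)
    then show ?thesis using ab(1,2) by simp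
  next
    fix p assume p: "p permutes {..<4}" "\<forall>a<4. \<bar>q a\<bar> = [0, 1/2, 1 / (2 * golden), golden / 2] ! (p a)"
    let ?L = "[0, 1/2, 1 / (2 * golden), golden / 2] :: real list"
    have "(\<Sum>i<4. (q i)^2) = (\<Sum>i<4. (?L ! (p i))^2)"
      using p(2) by (intro sum.cong refl sq) auto
    also have "\<dots> = (\<Sum>i<4. (?L ! i)^2)"
      using sum.permute[OF p(1), of "\<lambda>i. (?L ! i)^2"] by (simp add: comp_def)
    finally show ?thesis using icosa_norm by simp
  qed
  then show ?thesis by (simp add: sum_lessThan_4)
qed

lemma binary_polyhedral_det:
  assumes "\<Gamma> \<in> {binary_tetrahedral, binary_octahedral, binary_icosahedral}" and "g \<in> \<Gamma>"
  shows "g$1$1 * g$2$2 - g$1$2 * g$2$1 = 1"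
proof -
  have "\<Gamma> \<subseteq> quat_mat ` (hurwitz_units \<union> octa_extra \<union> icosa_extra)"
    using assms(1) unfolding binary_tetrahedral_def binary_octahedral_def binary_icosahedral_def by auto
  then obtain q where q: "q \<in> hurwitz_units \<union> octa_extra \<union> icosa_extra" "g = quat_mat q"
    using assms(2) by blast
  show ?thesis using quat_mat_det[of q, unfolded unit_quaternions_norm[OF q(1)]] q(2) by simp
qed

lemma binary_polyhedral_neg_one:
  assumes "\<Gamma> \<in> {binary_tetrahedral, binary_octahedral, binary_icosahedral}"
  shows "- mat 1 \<in> \<Gamma>"
proof -
  define q :: "nat \<Rightarrow> real" where "q = (\<lambda>i. if i = 0 then -1 else 0)"
  have "q \<in> hurwitz_units" unfolding hurwitz_units_def q_def by (intro CollectI disjI1 exI[of _ 0]) auto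
  moreover have "quat_mat q = - mat 1"
    unfolding quat_mat_def q_def by (simp add: vec_eq_iff forall_2 mat_def complex_eq_iff)
  ultimately show ?thesis using assms
    unfolding binary_tetrahedral_def binary_octahedral_def binary_icosahedral_def by force
qed

theorem mainTheorem7:
  fixes \<Gamma> :: "(complex^2^2) set" and \<rho> :: "complex^2^2 \<Rightarrow> complex^'n^'n"
  assumes "\<Gamma> \<in> {binary_tetrahedral, binary_octahedral, binary_icosahedral}"
    and "irred_rep \<Gamma> \<rho>"
  shows "Pser \<Gamma> \<rho> 3 sym2_mat =
           (if spinorial \<rho> then 0
            else Abs_fps (\<lambda>n. fps_nth (Pser \<Gamma> \<rho> 2 std_mat) (2 * n)) * inverse (1 - fps_X ^ 2))"
proof (cases "spinorial \<rho>")
  case True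
  interpret fs: vector_space "fscale :: complex \<Rightarrow> ('n \<Rightarrow> nat list \<Rightarrow> complex) \<Rightarrow> _"
    by (rule fscale_vector_space)
  have "HomG \<Gamma> \<rho> 3 sym2_mat n = {0}" for n
    using True HomG_eq_0_if_spinorial[OF binary_polyhedral_neg_one[OF assms(1)]] by (simp add: spinorial_def)
  then show ?thesis using True by (simp add: Pser_def fs.dim_zero_space fps_eq_iff)
next
  case False
  have "Pser \<Gamma> \<rho> 3 sym2_mat = Abs_fps (\<lambda>n. fps_nth (Pser \<Gamma> \<rho> 2 std_mat) (2 * n)) * inverse (1 - fps_X ^ 2)"
    using binary_polyhedral_det[OF assms(1)]
    by (intro fps_eq_mult_inverse_if_recurrence) (simp add: Pser_def dim_HomG_sym2)
  then show ?thesis using False by simp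
qed

end
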